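(* Under the standing assumptions below, the dual value function $D$ belongs to $\mathcal N$, and $D$ is the largest fixed point of the Bellman operator $\mathcal B$ in $\mathcal N$.
   Context: Setup. Let $\mathcal S$ be a finite set and $(s_t)_{t\ge0}$ a Markov chain on $\mathcal S$ with transition probabilities $\pi(s'|s)>0$ for all $s,s'\in\mathcal S$; for $s^t=(s_0,\dots,s_t)\in\mathcal S^{t+1}$ write $\pi^t(s^t|s_0)$ for its probability given $s_0$ and $\mathbb E_{s_t}$ for expectation over future shocks given $s^t$; $\mathbb E_s$ denotes expectation over $s'\sim\pi(\cdot|s)$. Let $\mathcal A\subset\mathbb R^n$ be a finite set, $\mathcal X\subseteq\mathbb R^m$ a countable set, $\zeta:\mathcal X\times\mathcal A\times\mathcal S\to\mathcal X$, $p:\mathcal X\times\mathcal A\times\mathcal S\to\mathbb R$, $r,g^1,\dots,g^I$ bounded real functions on $\mathcal X\times\mathcal A\times\mathcal S$, $\bar g^i\in\mathbb R$, $\beta\in(0,1)$. A plan is $a=(a(s^t))_{t,s^t}$, $a(s^t)\in\mathcal A$, inducing $x(s^0)=x_0$, $x(s^{t+1})=\zeta(x(s^t),a(s^t),s_t)$. $\tilde{\mathcal A}(x,s)=\{a\in\mathcal A:p(x,a,s)\ge0\}$; $\tilde{\mathcal A}^\infty(x_0)$ is the set of plans with $a(s^t)\in\tilde{\mathcal A}(x(s^t),s_t)$ for all $t,s^t$. A plan is feasible for $(x_0,s_0)$ if it lies in $\tilde{\mathcal A}^\infty(x_0)$ and $\mathbb E_{s_t}\sum_{n\ge0}\beta^ng^i(x(s^{t+n}),a(s^{t+n}),s_{t+n})\ge\bar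 g^i$ for all $t,s^t,i$. Standing assumption: for every $(x_0,s_0)$ a feasible plan exists. Pre-action histories $h^t=(s_0,a_0,\dots,s_{t-1},a_{t-1},s_t)\in\mathcal H^t=\mathcal S^{t+1}\times\mathcal A^t$; a plan generates $h^t=(s_0,a(s^0),\dots,a(s^{t-1}),s_t)$ along $s^t$. Dual value: $\Lambda$ is the set of $(\lambda^i(h^t))_{t,h^t,i}$, $\lambda^i(h^t)\ge0$, $\sum_t\sum_{h^t}\sum_i\beta^t\lambda^i(h^t)\pi^t(s^t|s_0)<\infty$. $L(a,\lambda;\gamma,x_0,s_0)=\mathbb E_{s_0}\sum_t\beta^t\big[r(x(s^t),a(s^t),s_t)+\sum_i\gamma^ig^i(x(s^t),a(s^t),s_t)+\sum_i\lambda^i(h^t)(\sum_{n\ge0}\beta^ng^i(x(s^{t+n}),a(s^{t+n}),s_{t+n})-\bar g^i)\big]$ and $D(\gamma,x_0,s_0)=\inf_{\lambda\in\Lambda}\sup_{a\in\tilde{\mathcal A}^\infty(x_0)}L$, for $\gamma\in\mathbb R^I_+$. Function spaces. $L=(\|r\|_\infty+\sum_i\|g^i\|_\infty)/(1-\beta)$ (a constant), $B(k)=\{\gamma\in\mathbb R^I_+:\|\gamma\|_\infty\le k\}$, $\mathcal S=\{s_1,\dots,s_{|\mathcal S|}\}$, $\mathcal X=\{x_1,x_2,\dots\}$. $\mathcal M$: functions $F:\mathbb R^I_+\times\mathcal X\times\mathcal S\to\mathbb R$ with $F(\cdot,x,s)\in L^\infty(B(k))$ for all $k$ and $\|F\|_{\mathcal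 M}=\sum_i2^{-i}\sum_j2^{-j}\sum_{k\ge1}2^{-k}\|F(\cdot,x_j,s_i)\|_{L^\infty(B(k))}<\infty$. $\mathcal N$: those $F\in\mathcal M$ with, for all $x,s$, (i) $F(\cdot,x,s)$ convex; (ii) $|F(\gamma_1,x,s)-F(\gamma_2,x,s)|\le L\|\gamma_1-\gamma_2\|_1$; (iii) $F(\gamma,x,s)\ge v^0+\sum_i\gamma^iv^i$ for every feasible plan for $(x,s)$, $v^0=\mathbb E_s\sum_t\beta^tr(\cdot)$, $v^i=\mathbb E_s\sum_t\beta^tg^i(\cdot)$; (iv) $F(\gamma,x,s)\le(1+\sum_i\gamma^i)L$. Bellman operator: $\mathcal B(F)(\gamma,x,s)=\inf_{\lambda\in\mathbb R^I_+}\sup_{a\in\tilde{\mathcal A}(x,s)}\big[r(x,a,s)+\sum_i(\gamma^ig^i(x,a,s)+\lambda^i(g^i(x,a,s)-\bar g^i))+\beta\mathbb E_sF(\gamma+\lambda,\zeta(x,a,s),s')\big]$. *)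

theory Defs
  imports "HOL-Analysis.Analysis"
begin

text \<open>The primitive data of the dynamic problem.  Types: 'x = points of X (a subset of R^m),
'a = actions (elements of R^n), 's = shocks (finite type), 'i = index set of the I
constraints (finite type).\<close>

record ('x, 'a, 's, 'i) model =
  trP   :: "'s \<Rightarrow> 's \<Rightarrow> real"          (* trP s s' = pi(s'|s) *)
  Act   :: "'a set"
  Xs    :: "'x set"
  zeta  :: "'x \<Rightarrow> 'a \<Rightarrow> 's \<Rightarrow> 'x"
  pcon  :: "'x \<Rightarrow> 'a \<Rightarrow> 's \<Rightarrow> real"
  rew   :: "'x \<Rightarrow> 'a \<Rightarrow> 's \<Rightarrow> real"
  gcon  :: "'i \<Rightarrow> 'x \<Rightarrow> 'a \<Rightarrow> 's \<Rightarrow> real"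
  gbar  :: "'i \<Rightarrow> real"
  disc  :: real

fun pathprob :: "('s \<Rightarrow> 's \<Rightarrow> real) \<Rightarrow> 's \<Rightarrow> 's list \<Rightarrow> real" where
  "pathprob Q s [] = 1"
| "pathprob Q s (y # ys) = Q s y * pathprob Q y ys"

text \<open>Histories s^t are nonempty lists [s_0,...,s_t]; plans are maps from histories to actions.
 xk z a x0 hs k = x(s^k) for s^k = take (k+1) hs.\<close>
fun xk :: "('x \<Rightarrow> 'a \<Rightarrow> 's \<Rightarrow> 'x) \<Rightarrow> ('s list \<Rightarrow> 'a) \<Rightarrow> 'x \<Rightarrow> 's list \<Rightarrow> nat \<Rightarrow> 'x" where
  "xk z a x0 hs 0 = x0"
| "xk z a x0 hs (Suc k) = z (xk z a x0 hs k) (a (take (Suc k) hs)) (hs ! k)"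

definition xpath :: "('x,'a,'s,'i) model \<Rightarrow> ('s list \<Rightarrow> 'a) \<Rightarrow> 'x \<Rightarrow> 's list \<Rightarrow> 'x" where
  "xpath M a x0 hs = xk (zeta M) a x0 hs (length hs - 1)"

definition stg :: "('x,'a,'s,'i) model \<Rightarrow> ('x \<Rightarrow> 'a \<Rightarrow> 's \<Rightarrow> real) \<Rightarrow> ('s list \<Rightarrow> 'a) \<Rightarrow> 'x
    \<Rightarrow> 's list \<Rightarrow> real" where
  "stg M h a x0 hs = h (xpath M a x0 hs) (a hs) (last hs)"

definition condsum :: "('x,'a,'s::finite,'i) model \<Rightarrow> 's list \<Rightarrow> ('s list \<Rightarrow> real) \<Rightarrow> real" where
  "condsum M hs f = (\<Sum>n. disc M ^ n *
      (\<Sum>ys\<in>{ys::'s list. length ys = n}. pathprob (trP M) (last hs) ys * f (hs @ ys)))"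

definition adm :: "('x,'a,'s,'i) model \<Rightarrow> 'x \<Rightarrow> ('s list \<Rightarrow> 'a) \<Rightarrow> bool" where
  "adm M x0 a \<longleftrightarrow> (\<forall>hs. hs \<noteq> [] \<longrightarrow>
      a hs \<in> Act M \<and> pcon M (xpath M a x0 hs) (a hs) (last hs) \<ge> 0)"

definition feasible :: "('x,'a,'s::finite,'i) model \<Rightarrow> 'x \<Rightarrow> 's \<Rightarrow> ('s list \<Rightarrow> 'a) \<Rightarrow> bool" where
  "feasible M x0 s0 a \<longleftrightarrow> adm M x0 a \<and>
     (\<forall>hs i. hs \<noteq> [] \<and> hd hs = s0 \<longrightarrow> condsum M hs (stg M (gcon M i) a x0) \<ge> gbar M i)"

text \<open>Pre-action histories h^t = (s_0,a_0,...,s_{t-1},a_{t-1},s_t), represented as the pair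
 ([s_0,...,s_t], [a_0,...,a_{t-1}]).\<close>
definition Hset :: "('x,'a,'s,'i) model \<Rightarrow> nat \<Rightarrow> ('s list \<times> 'a list) set" where
  "Hset M t = {(ss, as). length ss = Suc t \<and> length as = t \<and> set as \<subseteq> Act M}"

definition hist_of :: "('s list \<Rightarrow> 'a) \<Rightarrow> 's list \<Rightarrow> 's list \<times> 'a list" where
  "hist_of a hs = (hs, map (\<lambda>k. a (take (Suc k) hs)) [0..<length hs - 1])"

definition pit :: "('x,'a,'s,'i) model \<Rightarrow> 's \<Rightarrow> 's list \<Rightarrow> real" where
  "pit M s0 ss = (if ss \<noteq> [] \<and> hd ss = s0 then pathprob (trP M) s0 (tl ss) else 0)"

definition Lambda :: "('x,'a,'s::finite,'i::finite) model \<Rightarrow> 's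
    \<Rightarrow> (('s list \<times> 'a list) \<Rightarrow> 'i \<Rightarrow> real) set" where
  "Lambda M s0 = {lam. (\<forall>h i. lam h i \<ge> 0) \<and>
      summable (\<lambda>t. \<Sum>h\<in>Hset M t. \<Sum>i\<in>UNIV. disc M ^ t * lam h i * pit M s0 (fst h))}"

definition Lag :: "('x,'a,'s::finite,'i::finite) model \<Rightarrow> ('s list \<Rightarrow> 'a)
    \<Rightarrow> (('s list \<times> 'a list) \<Rightarrow> 'i \<Rightarrow> real) \<Rightarrow> real^'i \<Rightarrow> 'x \<Rightarrow> 's \<Rightarrow> real" where
  "Lag M a lam \<gamma> x0 s0 = (\<Sum>t. disc M ^ t *
     (\<Sum>ys\<in>{ys::'s list. length ys = t}. pathprob (trP M) s0 ys *
        (stg M (rew M) a x0 (s0 # ys)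
         + (\<Sum>i\<in>UNIV. \<gamma> $ i * stg M (gcon M i) a x0 (s0 # ys))
         + (\<Sum>i\<in>UNIV. lam (hist_of a (s0 # ys)) i *
              (condsum M (s0 # ys) (stg M (gcon M i) a x0) - gbar M i)))))"

definition Dval :: "('x,'a,'s::finite,'i::finite) model \<Rightarrow> real^'i \<Rightarrow> 'x \<Rightarrow> 's \<Rightarrow> real" where
  "Dval M \<gamma> x0 s0 = (INF lam\<in>Lambda M s0. SUP a\<in>{a. adm M x0 a}. Lag M a lam \<gamma> x0 s0)"

definition Pos :: "(real^'i) set" where
  "Pos = {\<gamma>. \<forall>i. 0 \<le> \<gamma> $ i}"

definition Bk :: "nat \<Rightarrow> (real^'i) set" where
  "Bk k = {\<gamma>\<in>Pos. \<forall>i. \<gamma> $ i \<le> real k}"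

definition supnorm :: "('x,'a,'s,'i) model \<Rightarrow> ('x \<Rightarrow> 'a \<Rightarrow> 's \<Rightarrow> real) \<Rightarrow> real" where
  "supnorm M h = (SUP z\<in>Xs M \<times> Act M \<times> UNIV. \<bar>h (fst z) (fst (snd z)) (snd (snd z))\<bar>)"

definition Lconst :: "('x,'a,'s,'i::finite) model \<Rightarrow> real" where
  "Lconst M = (supnorm M (rew M) + (\<Sum>i\<in>UNIV. supnorm M (gcon M i))) / (1 - disc M)"

definition normk :: "(real^'i \<Rightarrow> 'x \<Rightarrow> 's \<Rightarrow> real) \<Rightarrow> 'x \<Rightarrow> 's \<Rightarrow> nat \<Rightarrow> real" where
  "normk F x s k = (SUP \<gamma>\<in>Bk k. \<bar>F \<gamma> x s\<bar>)"

text \<open>Membership in the space M (with respect to the enumeration x_j = the point with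
 index xidx x_j = j of X): the weighted norm is finite.\<close>
definition inM :: "('x,'a,'s,'i::finite) model \<Rightarrow> ('x \<Rightarrow> nat)
    \<Rightarrow> (real^'i \<Rightarrow> 'x \<Rightarrow> 's \<Rightarrow> real) \<Rightarrow> bool" where
  "inM M xidx F \<longleftrightarrow>
     (\<forall>x\<in>Xs M. \<forall>s. \<forall>k\<ge>1. bounded ((\<lambda>\<gamma>. F \<gamma> x s) ` Bk k)) \<and>
     (\<forall>x\<in>Xs M. \<forall>s. summable (\<lambda>k. (1/2) ^ Suc k * normk F x s (Suc k))) \<and>
     (\<forall>s. (\<lambda>x. (1/2) ^ xidx x * (\<Sum>k. (1/2) ^ Suc k * normk F x s (Suc k))) summable_on Xs M)"

definition inN :: "('x,'a,'s::finite,'i::finite) model \<Rightarrow> ('x \<Rightarrow> nat)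
    \<Rightarrow> (real^'i \<Rightarrow> 'x \<Rightarrow> 's \<Rightarrow> real) \<Rightarrow> bool" where
  "inN M xidx F \<longleftrightarrow> inM M xidx F \<and>
     (\<forall>x\<in>Xs M. \<forall>s.
        convex_on Pos (\<lambda>\<gamma>. F \<gamma> x s) \<and>
        (\<forall>\<gamma>1\<in>Pos. \<forall>\<gamma>2\<in>Pos. \<bar>F \<gamma>1 x s - F \<gamma>2 x s\<bar> \<le> Lconst M * (\<Sum>i\<in>UNIV. \<bar>\<gamma>1 $ i - \<gamma>2 $ i\<bar>)) \<and>
        (\<forall>a. feasible M x s a \<longrightarrow> (\<forall>\<gamma>\<in>Pos.
            F \<gamma> x s \<ge> condsum M [s] (stg M (rew M) a x)
                      + (\<Sum>i\<in>UNIV. \<gamma> $ i * condsum M [s] (stg M (gcon M i) a x)))) \<and>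
        (\<forall>\<gamma>\<in>Pos. F \<gamma> x s \<le> (1 + (\<Sum>i\<in>UNIV. \<gamma> $ i)) * Lconst M))"

definition Bell :: "('x,'a,'s::finite,'i::finite) model \<Rightarrow> (real^'i \<Rightarrow> 'x \<Rightarrow> 's \<Rightarrow> real)
    \<Rightarrow> real^'i \<Rightarrow> 'x \<Rightarrow> 's \<Rightarrow> real" where
  "Bell M F \<gamma> x s = (INF lam\<in>Pos. SUP a\<in>{a\<in>Act M. pcon M x a s \<ge> 0}.
      rew M x a s
      + (\<Sum>i\<in>UNIV. \<gamma> $ i * gcon M i x a s + lam $ i * (gcon M i x a s - gbar M i))
      + disc M * (\<Sum>s'\<in>UNIV. trP M s s' * F (\<gamma> + lam) (zeta M x a s) s'))"

end

theory Submission
  imports Defs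
begin

text \<open>
  Splitting off the first period, the Lagrangian is the one-period payoff
  \<open>r + \<Sum>\<^sub>i (\<gamma>\<^sup>i g\<^sup>i + \<lambda>\<^sup>i(h\<^sup>0) (g\<^sup>i - gbar\<^sup>i))\<close> plus \<open>\<beta>\<close> times the expected Lagrangian of the
  continuation plan and multipliers, evaluated at the weights \<open>\<gamma> + \<lambda>(h\<^sup>0)\<close>. The head
  \<open>\<lambda>(h\<^sup>0)\<close> ranges over all of \<open>\<real>\<^sup>I\<^sub>+\<close>, and continuations after different first shocks and
  actions can be chosen independently; gluing \<open>\<epsilon>\<close>-optimal continuation plans gives
  \<open>\<B>(D) \<le> D\<close>, gluing \<open>\<epsilon>\<close>-optimal continuation multipliers gives \<open>D \<le> \<B>(D)\<close>.
  The Lagrangian is affine in \<open>(\<gamma>, \<lambda>)\<close> and bounded in terms of the payoff bounds, which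
  yields the convexity, Lipschitz and growth properties putting \<open>D\<close> into \<open>\<N>\<close>.
  If \<open>F \<in> \<N>\<close> is another fixed point, unrolling its Bellman equation \<open>n\<close> times along a
  multiplier \<open>\<lambda>\<close> bounds \<open>F - sup\<^sub>a L(a, \<lambda>)\<close> by \<open>\<beta>\<^sup>n\<close>-discounted terms that vanish since
  \<open>\<lambda>\<close> is summable; hence \<open>F \<le> D\<close>.
\<close>

lemma sum_inj_image_le:
  fixes G :: "'b \<Rightarrow> real"
  assumes "inj_on g A" "g ` A \<subseteq> B" "finite B" "\<And>x. x \<in> B \<Longrightarrow> 0 \<le> G x"
  shows "(\<Sum>a\<in>A. G (g a)) \<le> (\<Sum>x\<in>B. G x)"
proof -
  have "(\<Sum>a\<in>A. G (g a)) = (\<Sum>x\<in>g ` A. G x)" by (simp add: sum.reindex[OF assms(1)])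
  also have "\<dots> \<le> (\<Sum>x\<in>B. G x)" by (rule sum_mono2) (use assms in auto)
  finally show ?thesis .
qed

lemma discounted_convolution_tendsto_zero:
  fixes f :: "nat \<Rightarrow> real" and b :: real
  assumes "summable f" "\<And>k. 0 \<le> f k" "0 < b" "b < 1"
  shows "(\<lambda>n. \<Sum>k<n. b ^ (n - k) * f k) \<longlonglongrightarrow> 0"
proof -
  have "summable (\<lambda>k. norm (f k))" "summable (\<lambda>k. norm (b ^ k))"
    using assms by (simp_all add: summable_geometric)
  then have "(\<lambda>m. \<Sum>i\<le>m. f i * b ^ (m - i)) sums ((\<Sum>k. f k) * (\<Sum>k. b ^ k))"
    by (rule Cauchy_product_sums)
  then have "(\<lambda>m. b * (\<Sum>i\<le>m. f i * b ^ (m - i))) \<longlonglongrightarrow> 0"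
    by (intro tendsto_mult_right_zero summable_LIMSEQ_zero sums_summable)
  moreover have "b * (\<Sum>i\<le>m. f i * b ^ (m - i)) = (\<Sum>k<Suc m. b ^ (Suc m - k) * f k)" for m
    unfolding lessThan_Suc_atMost sum_distrib_left
    by (intro sum.cong refl) (simp add: Suc_diff_le mult_ac)
  ultimately have "(\<lambda>m. \<Sum>k<Suc m. b ^ (Suc m - k) * f k) \<longlonglongrightarrow> 0"
    by simp
  then show ?thesis by (rule LIMSEQ_imp_Suc)
qed

lemma summable_Suc_times_half_power: "summable (\<lambda>k. real (Suc k) * (1/2::real) ^ k)"
proof -
  have "summable (\<lambda>k. norm ((1/2::real) ^ k))" by (simp add: summable_geometric)
  then have "(\<lambda>k. \<Sum>i\<le>k. (1/2::real) ^ i * (1/2) ^ (k - i)) sums ((\<Sum>k. (1/2) ^ k) * (\<Sum>k. (1/2) ^ k))"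
    by (intro Cauchy_product_sums)
  moreover have "(\<Sum>i\<le>k. (1/2::real) ^ i * (1/2) ^ (k - i)) = real (Suc k) * (1/2) ^ k" for k
  proof -
    have "(\<Sum>i\<le>k. (1/2::real) ^ i * (1/2) ^ (k - i)) = (\<Sum>i\<le>k. (1/2::real) ^ k)"
      by (intro sum.cong refl) (simp add: power_add[symmetric])
    then show ?thesis by simp
  qed
  ultimately show ?thesis using sums_summable by simp
qed

lemma sum_weighted_rec_regroup:
  fixes \<gamma> l g c :: "'i::finite \<Rightarrow> real" and q :: "'s::finite \<Rightarrow> real" and V :: "'i \<Rightarrow> 's \<Rightarrow> real"
  shows "(\<Sum>i\<in>UNIV. \<gamma> i * (g i + b * (\<Sum>s\<in>UNIV. q s * V i s))) +
         (\<Sum>i\<in>UNIV. l i * ((g i + b * (\<Sum>s\<in>UNIV. q s * V i s)) - c i)) =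
         (\<Sum>i\<in>UNIV. \<gamma> i * g i + l i * (g i - c i)) + b * (\<Sum>s\<in>UNIV. q s * (\<Sum>i\<in>UNIV. (\<gamma> i + l i) * V i s))"
proof -
  have "b * (\<Sum>s\<in>UNIV. q s * (\<Sum>i\<in>UNIV. (\<gamma> i + l i) * V i s)) =
        (\<Sum>s\<in>UNIV. \<Sum>i\<in>UNIV. b * (q s * ((\<gamma> i + l i) * V i s)))"
    by (simp add: sum_distrib_left)
  also have "\<dots> = (\<Sum>i\<in>UNIV. \<Sum>s\<in>UNIV. b * (q s * ((\<gamma> i + l i) * V i s)))"
    by (rule sum.swap)
  also have "\<dots> = (\<Sum>i\<in>UNIV. (\<gamma> i + l i) * (b * (\<Sum>s\<in>UNIV. q s * V i s)))"
    by (simp add: sum_distrib_left mult_ac)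
  finally have swap: "b * (\<Sum>s\<in>UNIV. q s * (\<Sum>i\<in>UNIV. (\<gamma> i + l i) * V i s)) =
      (\<Sum>i\<in>UNIV. (\<gamma> i + l i) * (b * (\<Sum>s\<in>UNIV. q s * V i s)))" .
  show ?thesis unfolding swap sum.distrib[symmetric]
    by (rule sum.cong) (simp_all add: algebra_simps)
qed

lemma Pos_nonneg: "\<gamma> \<in> Pos \<Longrightarrow> 0 \<le> \<gamma> $ i"
  unfolding Pos_def by auto

lemma Pos_add: "\<gamma> \<in> Pos \<Longrightarrow> l \<in> Pos \<Longrightarrow> \<gamma> + l \<in> Pos"
  unfolding Pos_def by auto

lemma zero_in_Pos: "0 \<in> Pos"
  unfolding Pos_def by simp

lemma convex_Pos: "convex Pos"
  unfolding convex_def Pos_def by auto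

lemma zero_in_Bk: "0 \<in> Bk k"
  unfolding Bk_def Pos_def by simp

section \<open>Discounted expectations along the shock chain\<close>

locale discounted_chain =
  fixes Q :: "'s::finite \<Rightarrow> 's \<Rightarrow> real" and \<beta> :: real
  assumes Q_pos: "\<And>s s'. 0 < Q s s'"
    and Q_sum: "\<And>s. (\<Sum>s'\<in>UNIV. Q s s') = 1"
    and disc_pos: "0 < \<beta>" and disc_less_1: "\<beta> < 1"
begin

definition expect :: "'s \<Rightarrow> nat \<Rightarrow> ('s list \<Rightarrow> real) \<Rightarrow> real" where
  "expect s n \<phi> = (\<Sum>ys\<in>{ys. length ys = n}. pathprob Q s ys * \<phi> ys)"

definition disc_sum :: "'s \<Rightarrow> ('s list \<Rightarrow> real) \<Rightarrow> real" where
  "disc_sum s \<phi> = (\<Sum>n. \<beta> ^ n * expect s n \<phi>)"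

definition disc_summable :: "'s \<Rightarrow> ('s list \<Rightarrow> real) \<Rightarrow> bool" where
  "disc_summable s \<phi> \<longleftrightarrow> summable (\<lambda>n. \<beta> ^ n * expect s n (\<lambda>ys. \<bar>\<phi> ys\<bar>))"

lemma pathprob_pos: "0 < pathprob Q s ys"
  by (induction ys arbitrary: s) (auto simp: Q_pos)

lemma pathprob_nonneg: "0 \<le> pathprob Q s ys"
  using pathprob_pos less_imp_le by blast

lemma expect_0: "expect s 0 \<phi> = \<phi> []"
  by (simp add: expect_def)

lemma expect_Suc: "expect s (Suc n) \<phi> = (\<Sum>s1\<in>UNIV. Q s s1 * expect s1 n (\<lambda>ys. \<phi> (s1 # ys)))"
proof -
  have lists: "{ys::'s list. length ys = Suc n} = (\<lambda>(y, ys). y # ys) ` (UNIV \<times> {ys. length ys = n})"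
    by (auto simp: length_Suc_conv image_def)
  have inj: "inj_on (\<lambda>(y, ys). y # ys) (UNIV \<times> {ys::'s list. length ys = n})"
    by (auto simp: inj_on_def)
  have "expect s (Suc n) \<phi> = (\<Sum>p\<in>UNIV \<times> {ys::'s list. length ys = n}.
      pathprob Q s (fst p # snd p) * \<phi> (fst p # snd p))"
    unfolding expect_def lists by (subst sum.reindex[OF inj]) (simp add: case_prod_beta comp_def)
  also have "\<dots> = (\<Sum>s1\<in>UNIV. \<Sum>ys\<in>{ys::'s list. length ys = n}. pathprob Q s (s1 # ys) * \<phi> (s1 # ys))"
    by (simp only: sum.cartesian_product) (simp add: case_prod_beta)
  also have "\<dots> = (\<Sum>s1\<in>UNIV. Q s s1 * expect s1 n (\<lambda>ys. \<phi> (s1 # ys)))"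
    by (simp add: expect_def sum_distrib_left mult.assoc)
  finally show ?thesis .
qed

lemma expect_const: "expect s n (\<lambda>_. c) = c"
  by (induction n arbitrary: s) (simp_all add: expect_0 expect_Suc sum_distrib_right[symmetric] Q_sum)

lemma expect_mono: "(\<And>ys. \<phi> ys \<le> \<psi> ys) \<Longrightarrow> expect s n \<phi> \<le> expect s n \<psi>"
  unfolding expect_def by (rule sum_mono) (simp add: mult_left_mono pathprob_nonneg)

lemma expect_add: "expect s n (\<lambda>ys. \<phi> ys + \<psi> ys) = expect s n \<phi> + expect s n \<psi>"
  unfolding expect_def by (simp add: distrib_left sum.distrib)

lemma expect_cmult: "expect s n (\<lambda>ys. c * \<phi> ys) = c * expect s n \<phi>"
  unfolding expect_def by (simp add: sum_distrib_left mult_ac)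

lemma expect_sum: "expect s n (\<lambda>ys. \<Sum>i\<in>I. \<phi> i ys) = (\<Sum>i\<in>I. expect s n (\<phi> i))"
  unfolding expect_def by (simp add: sum_distrib_left sum.swap[of _ I])

lemma expect_abs_le: "\<bar>expect s n \<phi>\<bar> \<le> expect s n (\<lambda>ys. \<bar>\<phi> ys\<bar>)"
  unfolding expect_def by (rule order_trans[OF sum_abs]) (simp add: abs_mult pathprob_nonneg)

lemma expect_nonneg: "(\<And>ys. 0 \<le> \<phi> ys) \<Longrightarrow> 0 \<le> expect s n \<phi>"
  using expect_mono[of "\<lambda>_. 0" \<phi>] by (simp add: expect_const)

lemma expect_le_const: "(\<And>ys. \<phi> ys \<le> C) \<Longrightarrow> expect s n \<phi> \<le> C"
  using expect_mono[of \<phi> "\<lambda>_. C"] by (simp add: expect_const)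

lemma summable_disc_power: "summable (\<lambda>n. \<beta> ^ n)"
  using disc_pos disc_less_1 by (intro summable_geometric) simp

lemma disc_summable_summable: "disc_summable s \<phi> \<Longrightarrow> summable (\<lambda>n. \<beta> ^ n * expect s n \<phi>)"
  unfolding disc_summable_def
  by (rule summable_comparison_test'[where N=0])
     (use disc_pos expect_abs_le in \<open>auto simp: abs_mult intro!: mult_left_mono\<close>)

lemma disc_summable_bounded: "(\<And>ys. \<bar>\<phi> ys\<bar> \<le> C) \<Longrightarrow> disc_summable s \<phi>"
  unfolding disc_summable_def
proof (rule summable_comparison_test'[where N=0])
  assume "\<And>ys. \<bar>\<phi> ys\<bar> \<le> C"
  then show "norm (\<beta> ^ n * expect s n (\<lambda>ys. \<bar>\<phi> ys\<bar>)) \<le> C * \<beta> ^ n" for n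
    using disc_pos expect_le_const[of "\<lambda>ys. \<bar>\<phi> ys\<bar>" C s n] expect_nonneg[of "\<lambda>ys. \<bar>\<phi> ys\<bar>" s n]
    by (simp add: abs_mult mult.commute mult_left_mono)
qed (intro summable_mult summable_disc_power)

lemma disc_summable_add:
  assumes "disc_summable s \<phi>" "disc_summable s \<psi>"
  shows "disc_summable s (\<lambda>ys. \<phi> ys + \<psi> ys)"
  unfolding disc_summable_def
proof (rule summable_comparison_test'[where N=0])
  show "summable (\<lambda>n. \<beta> ^ n * expect s n (\<lambda>ys. \<bar>\<phi> ys\<bar>) + \<beta> ^ n * expect s n (\<lambda>ys. \<bar>\<psi> ys\<bar>))"
    using assms unfolding disc_summable_def by (rule summable_add)
  fix n
  have "expect s n (\<lambda>ys. \<bar>\<phi> ys + \<psi> ys\<bar>) \<le> expect s n (\<lambda>ys. \<bar>\<phi> ys\<bar>) + expect s n (\<lambda>ys. \<bar>\<psi> ys\<bar>)"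
    unfolding expect_add[symmetric] by (rule expect_mono) simp
  then show "norm (\<beta> ^ n * expect s n (\<lambda>ys. \<bar>\<phi> ys + \<psi> ys\<bar>))
      \<le> \<beta> ^ n * expect s n (\<lambda>ys. \<bar>\<phi> ys\<bar>) + \<beta> ^ n * expect s n (\<lambda>ys. \<bar>\<psi> ys\<bar>)"
    using disc_pos expect_nonneg[of "\<lambda>ys. \<bar>\<phi> ys + \<psi> ys\<bar>" s n]
    by (simp add: abs_mult distrib_left[symmetric] mult_left_mono)
qed

lemma disc_summable_cmult: "disc_summable s \<phi> \<Longrightarrow> disc_summable s (\<lambda>ys. c * \<phi> ys)"
  unfolding disc_summable_def
  by (drule summable_mult[where c="\<bar>c\<bar>"]) (simp add: abs_mult expect_cmult mult_ac)

lemma disc_summable_sum: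
  "finite I \<Longrightarrow> (\<And>i. i \<in> I \<Longrightarrow> disc_summable s (\<phi> i)) \<Longrightarrow> disc_summable s (\<lambda>ys. \<Sum>i\<in>I. \<phi> i ys)"
  by (induction I rule: finite_induct) (simp_all add: disc_summable_bounded[where C=0] disc_summable_add)

text \<open>The first transition to \<open>s1\<close> has probability \<open>Q s s1 > 0\<close>, so the continuation from
  \<open>s1\<close> is dominated by a multiple of the tail of the series from \<open>s\<close>.\<close>
lemma disc_summable_shift:
  assumes "disc_summable s \<phi>"
  shows "disc_summable s1 (\<lambda>ys. \<phi> (s1 # ys))"
  unfolding disc_summable_def
proof (rule summable_comparison_test'[where N=0])
  have "summable (\<lambda>n. \<beta> ^ Suc n * expect s (Suc n) (\<lambda>ys. \<bar>\<phi> ys\<bar>))"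
    using assms unfolding disc_summable_def by (subst summable_Suc_iff)
  then show "summable (\<lambda>n. 1 / (\<beta> * Q s s1) * (\<beta> ^ Suc n * expect s (Suc n) (\<lambda>ys. \<bar>\<phi> ys\<bar>)))"
    by (rule summable_mult)
  fix n
  have "Q s s1 * expect s1 n (\<lambda>ys. \<bar>\<phi> (s1 # ys)\<bar>) \<le> expect s (Suc n) (\<lambda>ys. \<bar>\<phi> ys\<bar>)"
    unfolding expect_Suc
    by (rule member_le_sum[where f="\<lambda>s'. Q s s' * expect s' n (\<lambda>ys. \<bar>\<phi> (s' # ys)\<bar>)"])
       (simp_all add: less_imp_le[OF Q_pos] expect_nonneg)
  then have "\<beta> ^ n * expect s1 n (\<lambda>ys. \<bar>\<phi> (s1 # ys)\<bar>)
      \<le> 1 / (\<beta> * Q s s1) * (\<beta> ^ Suc n * expect s (Suc n) (\<lambda>ys. \<bar>\<phi> ys\<bar>))"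
    using disc_pos Q_pos[of s s1] by (simp add: field_simps)
  then show "norm (\<beta> ^ n * expect s1 n (\<lambda>ys. \<bar>\<phi> (s1 # ys)\<bar>))
      \<le> 1 / (\<beta> * Q s s1) * (\<beta> ^ Suc n * expect s (Suc n) (\<lambda>ys. \<bar>\<phi> ys\<bar>))"
    using disc_pos expect_nonneg[of "\<lambda>ys. \<bar>\<phi> (s1 # ys)\<bar>" s1 n] by (simp add: abs_mult)
qed

lemma disc_sum_add:
  "disc_summable s \<phi> \<Longrightarrow> disc_summable s \<psi> \<Longrightarrow> disc_sum s (\<lambda>ys. \<phi> ys + \<psi> ys) = disc_sum s \<phi> + disc_sum s \<psi>"
  unfolding disc_sum_def expect_add distrib_left
  by (intro suminf_add[symmetric] disc_summable_summable)

lemma disc_sum_cmult: "disc_summable s \<phi> \<Longrightarrow> disc_sum s (\<lambda>ys. c * \<phi> ys) = c * disc_sum s \<phi>"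
  unfolding disc_sum_def expect_cmult
  by (simp add: mult.left_commute suminf_mult disc_summable_summable)

lemma disc_sum_sum:
  "finite I \<Longrightarrow> (\<And>i. i \<in> I \<Longrightarrow> disc_summable s (\<phi> i)) \<Longrightarrow>
    disc_sum s (\<lambda>ys. \<Sum>i\<in>I. \<phi> i ys) = (\<Sum>i\<in>I. disc_sum s (\<phi> i))"
  unfolding disc_sum_def expect_sum sum_distrib_left
  by (intro suminf_sum disc_summable_summable)

lemma disc_sum_mono:
  "disc_summable s \<phi> \<Longrightarrow> disc_summable s \<psi> \<Longrightarrow> (\<And>ys. \<phi> ys \<le> \<psi> ys) \<Longrightarrow> disc_sum s \<phi> \<le> disc_sum s \<psi>"
  unfolding disc_sum_def
  using disc_pos by (intro suminf_le disc_summable_summable mult_left_mono expect_mono) auto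

lemma disc_sum_const: "disc_sum s (\<lambda>_. c) = c / (1 - \<beta>)"
proof -
  have "(\<Sum>n. \<beta> ^ n) = 1 / (1 - \<beta>)" using disc_pos disc_less_1 by (intro suminf_geometric) simp
  then show ?thesis unfolding disc_sum_def expect_const
    by (subst suminf_mult2[symmetric, OF summable_disc_power]) simp
qed

lemma disc_sum_nonneg: "disc_summable s \<phi> \<Longrightarrow> (\<And>ys. 0 \<le> \<phi> ys) \<Longrightarrow> 0 \<le> disc_sum s \<phi>"
  using disc_sum_mono[of s "\<lambda>_. 0" \<phi>] disc_sum_const[of s 0] disc_summable_bounded[of "\<lambda>_. 0" 0]
  by simp

lemma disc_sum_abs_le: "(\<And>ys. \<bar>\<phi> ys\<bar> \<le> C) \<Longrightarrow> \<bar>disc_sum s \<phi>\<bar> \<le> C / (1 - \<beta>)"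
proof -
  assume bound: "\<And>ys. \<bar>\<phi> ys\<bar> \<le> C"
  have sum_phi: "disc_summable s \<phi>" and sum_neg: "disc_summable s (\<lambda>ys. -1 * \<phi> ys)"
    and sum_C: "disc_summable s (\<lambda>_. C)"
    using bound by (auto intro!: disc_summable_bounded[where C=C] disc_summable_bounded[where C="\<bar>C\<bar>"]
        intro: order_trans[OF _ abs_ge_self])
  have "disc_sum s \<phi> \<le> disc_sum s (\<lambda>_. C)"
    using bound abs_le_D1 by (intro disc_sum_mono sum_phi sum_C) blast
  moreover have "disc_sum s (\<lambda>ys. -1 * \<phi> ys) \<le> disc_sum s (\<lambda>_. C)"
    using bound abs_le_D2 by (intro disc_sum_mono sum_neg sum_C) (simp add: abs_le_iff)
  ultimately show ?thesis using disc_sum_cmult[OF sum_phi, of "-1"] unfolding disc_sum_const by auto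
qed

lemma disc_step_mono:
  "(\<And>s1. f s1 \<le> g s1) \<Longrightarrow> \<beta> * (\<Sum>s1\<in>UNIV. Q s s1 * f s1) \<le> \<beta> * (\<Sum>s1\<in>UNIV. Q s s1 * g s1)"
  using disc_pos Q_pos by (intro mult_left_mono sum_mono) (auto simp: less_imp_le)

lemma disc_step_le_add:
  assumes "\<And>s1. f s1 \<le> g s1 + e"
  shows "\<beta> * (\<Sum>s1\<in>UNIV. Q s s1 * f s1) \<le> \<beta> * (\<Sum>s1\<in>UNIV. Q s s1 * g s1) + \<beta> * e"
proof -
  have "\<beta> * (\<Sum>s1\<in>UNIV. Q s s1 * f s1) \<le> \<beta> * (\<Sum>s1\<in>UNIV. Q s s1 * (g s1 + e))"
    using assms by (rule disc_step_mono)
  then show ?thesis by (simp add: distrib_left sum.distrib sum_distrib_right[symmetric] Q_sum)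
qed

lemma disc_sum_rec:
  assumes "disc_summable s \<phi>"
  shows "disc_sum s \<phi> = \<phi> [] + \<beta> * (\<Sum>s1\<in>UNIV. Q s s1 * disc_sum s1 (\<lambda>ys. \<phi> (s1 # ys)))"
proof -
  have tail: "summable (\<lambda>n. \<beta> ^ n * expect s1 n (\<lambda>ys. \<phi> (s1 # ys)))" for s1
    by (intro disc_summable_summable disc_summable_shift[OF assms])
  have "disc_sum s \<phi> = (\<Sum>n. \<beta> ^ Suc n * expect s (Suc n) \<phi>) + \<phi> []"
    unfolding disc_sum_def using suminf_split_head[OF disc_summable_summable[OF assms]]
    by (simp add: expect_0)
  also have "(\<Sum>n. \<beta> ^ Suc n * expect s (Suc n) \<phi>) =
      (\<Sum>n. \<Sum>s1\<in>UNIV. \<beta> * Q s s1 * (\<beta> ^ n * expect s1 n (\<lambda>ys. \<phi> (s1 # ys))))"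
    unfolding expect_Suc by (simp add: sum_distrib_left mult_ac)
  also have "\<dots> = (\<Sum>s1\<in>UNIV. \<Sum>n. \<beta> * Q s s1 * (\<beta> ^ n * expect s1 n (\<lambda>ys. \<phi> (s1 # ys))))"
    by (rule suminf_sum) (intro summable_mult tail)
  also have "\<dots> = (\<Sum>s1\<in>UNIV. \<beta> * Q s s1 * disc_sum s1 (\<lambda>ys. \<phi> (s1 # ys)))"
    unfolding disc_sum_def by (intro sum.cong refl suminf_mult tail)
  finally show ?thesis by (simp add: sum_distrib_left mult_ac)
qed

end

section \<open>Plans and their values\<close>

lemma xk_Cons_Suc: "xk z a x0 (s0 # hs) (Suc k) = xk z (\<lambda>h. a (s0 # h)) (z x0 (a [s0]) s0) hs k"
  by (induction k) auto

lemma xk_cong: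
  assumes "hs \<noteq> []" "\<And>h. h \<noteq> [] \<Longrightarrow> hd h = hd hs \<Longrightarrow> a h = b h"
  shows "xk z a x hs k = xk z b x hs k"
proof (induction k)
  case (Suc k)
  have "take (Suc k) hs \<noteq> []" "hd (take (Suc k) hs) = hd hs"
    using assms(1) by (auto simp: hd_take neq_Nil_conv)
  then show ?case using Suc assms(2) by simp
qed simp

definition bounded_payoff :: "('x, 'a, 's, 'i) model \<Rightarrow> ('x \<Rightarrow> 'a \<Rightarrow> 's \<Rightarrow> real) \<Rightarrow> bool" where
  "bounded_payoff M h \<longleftrightarrow> (\<exists>C. \<forall>x\<in>Xs M. \<forall>a\<in>Act M. \<forall>s. \<bar>h x a s\<bar> \<le> C)"

lemma abs_le_supnorm:
  assumes "bounded_payoff M h" "x \<in> Xs M" "a \<in> Act M"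
  shows "\<bar>h x a s\<bar> \<le> supnorm M h"
proof -
  obtain C where "\<forall>x\<in>Xs M. \<forall>a\<in>Act M. \<forall>s. \<bar>h x a s\<bar> \<le> C"
    using assms(1) unfolding bounded_payoff_def by blast
  then have "bdd_above ((\<lambda>z. \<bar>h (fst z) (fst (snd z)) (snd (snd z))\<bar>) ` (Xs M \<times> Act M \<times> UNIV))"
    by (intro bdd_aboveI[where M=C]) auto
  then show ?thesis unfolding supnorm_def
    using cSUP_upper[of "(x, a, s)" "Xs M \<times> Act M \<times> UNIV"
        "\<lambda>z. \<bar>h (fst z) (fst (snd z)) (snd (snd z))\<bar>"] assms(2,3) by simp
qed

locale dual_problem = discounted_chain "trP M" "disc M"
  for M :: "('x, 'a, 's::finite, 'i::finite) model" +
  assumes finite_Act: "finite (Act M)"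
    and zeta_Xs: "\<And>x a s. x \<in> Xs M \<Longrightarrow> a \<in> Act M \<Longrightarrow> zeta M x a s \<in> Xs M"
    and bounded_rew: "bounded_payoff M (rew M)"
    and bounded_gcon: "\<And>i. bounded_payoff M (gcon M i)"
    and feasible_exists: "\<And>x s. x \<in> Xs M \<Longrightarrow> \<exists>a. feasible M x s a"
begin

abbreviation "\<beta> \<equiv> disc M"
abbreviation "Q \<equiv> trP M"

definition plan_shift :: "('s list \<Rightarrow> 'a) \<Rightarrow> 's \<Rightarrow> 's list \<Rightarrow> 'a" where
  "plan_shift a s0 = (\<lambda>h. a (s0 # h))"

definition plan_value :: "('x \<Rightarrow> 'a \<Rightarrow> 's \<Rightarrow> real) \<Rightarrow> ('s list \<Rightarrow> 'a) \<Rightarrow> 'x \<Rightarrow> 's \<Rightarrow> real" where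
  "plan_value h a x s = condsum M [s] (stg M h a x)"

definition adm_acts :: "'x \<Rightarrow> 's \<Rightarrow> 'a set" where
  "adm_acts x s = {a\<in>Act M. pcon M x a s \<ge> 0}"

lemma xpath_Cons:
  "hs \<noteq> [] \<Longrightarrow> xpath M a x0 (s0 # hs) = xpath M (plan_shift a s0) (zeta M x0 (a [s0]) s0) hs"
proof -
  assume "hs \<noteq> []"
  then have "length (s0 # hs) - 1 = Suc (length hs - 1)" by (cases hs) auto
  then show ?thesis unfolding xpath_def plan_shift_def by (simp only: xk_Cons_Suc)
qed

lemma adm_in_Act: "adm M x0 a \<Longrightarrow> hs \<noteq> [] \<Longrightarrow> a hs \<in> Act M"
  unfolding adm_def by blast

lemma xpath_in_Xs:
  assumes "adm M x0 a" "x0 \<in> Xs M" "hs \<noteq> []"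
  shows "xpath M a x0 hs \<in> Xs M"
proof -
  have "xk (zeta M) a x0 hs k \<in> Xs M" for k
  proof (induction k)
    case (Suc k)
    have "take (Suc k) hs \<noteq> []" using assms(3) by (auto simp: neq_Nil_conv)
    then show ?case using Suc zeta_Xs adm_in_Act[OF assms(1)] by simp
  qed (use assms(2) in simp)
  then show ?thesis unfolding xpath_def .
qed

lemma xpath_cong:
  "hs \<noteq> [] \<Longrightarrow> (\<And>h. h \<noteq> [] \<Longrightarrow> hd h = hd hs \<Longrightarrow> a h = b h) \<Longrightarrow> xpath M a x hs = xpath M b x hs"
  unfolding xpath_def by (rule xk_cong)

lemma stg_Cons:
  "hs \<noteq> [] \<Longrightarrow> stg M h a x0 (s0 # hs) = stg M h (plan_shift a s0) (zeta M x0 (a [s0]) s0) hs"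
  unfolding stg_def by (simp add: xpath_Cons plan_shift_def)

lemma stg_cong:
  "hs \<noteq> [] \<Longrightarrow> (\<And>h. h \<noteq> [] \<Longrightarrow> hd h = hd hs \<Longrightarrow> a h = b h) \<Longrightarrow> stg M f a x hs = stg M f b x hs"
  unfolding stg_def using xpath_cong[of hs a b x] by simp

lemma stg_abs_le_supnorm:
  "bounded_payoff M h \<Longrightarrow> adm M x0 a \<Longrightarrow> x0 \<in> Xs M \<Longrightarrow> hs \<noteq> [] \<Longrightarrow> \<bar>stg M h a x0 hs\<bar> \<le> supnorm M h"
  unfolding stg_def by (intro abs_le_supnorm xpath_in_Xs adm_in_Act)

lemma condsum_eq_disc_sum: "condsum M hs f = disc_sum (last hs) (\<lambda>ys. f (hs @ ys))"
  unfolding condsum_def disc_sum_def expect_def ..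

lemma condsum_Cons:
  "hs \<noteq> [] \<Longrightarrow>
    condsum M (s0 # hs) (stg M h a x0) = condsum M hs (stg M h (plan_shift a s0) (zeta M x0 (a [s0]) s0))"
  unfolding condsum_eq_disc_sum by (simp add: stg_Cons)

lemma condsum_cong:
  "hs \<noteq> [] \<Longrightarrow> (\<And>h. h \<noteq> [] \<Longrightarrow> hd h = hd hs \<Longrightarrow> a h = b h) \<Longrightarrow>
    condsum M hs (stg M f a x) = condsum M hs (stg M f b x)"
  unfolding condsum_eq_disc_sum by (intro arg_cong[where f="disc_sum _"] ext stg_cong) auto

lemma condsum_abs_le:
  "bounded_payoff M h \<Longrightarrow> adm M x0 a \<Longrightarrow> x0 \<in> Xs M \<Longrightarrow> hs \<noteq> [] \<Longrightarrow>
    \<bar>condsum M hs (stg M h a x0)\<bar> \<le> supnorm M h / (1 - \<beta>)"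
  unfolding condsum_eq_disc_sum by (rule disc_sum_abs_le) (simp add: stg_abs_le_supnorm)

lemma plan_value_abs_le:
  "bounded_payoff M h \<Longrightarrow> adm M x a \<Longrightarrow> x \<in> Xs M \<Longrightarrow> \<bar>plan_value h a x s\<bar> \<le> supnorm M h / (1 - \<beta>)"
  unfolding plan_value_def by (rule condsum_abs_le) auto

lemma plan_value_rec:
  assumes "bounded_payoff M h" "adm M x0 a" "x0 \<in> Xs M"
  shows "plan_value h a x0 s0 = h x0 (a [s0]) s0 +
     \<beta> * (\<Sum>s1\<in>UNIV. Q s0 s1 * plan_value h (plan_shift a s0) (zeta M x0 (a [s0]) s0) s1)"
proof -
  have "disc_summable s0 (\<lambda>ys. stg M h a x0 ([s0] @ ys))"
    using stg_abs_le_supnorm[OF assms] by (intro disc_summable_bounded[where C="supnorm M h"]) simp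
  moreover have "stg M h a x0 ([s0] @ s1 # ys) = stg M h (plan_shift a s0) (zeta M x0 (a [s0]) s0) ([s1] @ ys)"
    for s1 ys by (simp add: stg_Cons)
  moreover have "stg M h a x0 ([s0] @ []) = h x0 (a [s0]) s0" by (simp add: stg_def xpath_def)
  ultimately show ?thesis
    unfolding plan_value_def condsum_eq_disc_sum by (simp only: disc_sum_rec last.simps if_True simp_thms)
qed

lemma adm_plan_shift:
  assumes "adm M x0 a"
  shows "adm M (zeta M x0 (a [s0]) s0) (plan_shift a s0)"
  unfolding adm_def
proof (intro allI impI)
  fix hs :: "'s list" assume "hs \<noteq> []"
  moreover have "a (s0 # hs) \<in> Act M \<and> 0 \<le> pcon M (xpath M a x0 (s0 # hs)) (a (s0 # hs)) (last (s0 # hs))"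
    using assms unfolding adm_def by blast
  ultimately show "plan_shift a s0 hs \<in> Act M \<and>
      0 \<le> pcon M (xpath M (plan_shift a s0) (zeta M x0 (a [s0]) s0) hs) (plan_shift a s0 hs) (last hs)"
    by (simp add: xpath_Cons plan_shift_def)
qed

lemma feasible_plan_shift:
  assumes "feasible M x0 s0 a"
  shows "feasible M (zeta M x0 (a [s0]) s0) s1 (plan_shift a s0)"
  unfolding feasible_def
proof (intro conjI allI impI)
  show "adm M (zeta M x0 (a [s0]) s0) (plan_shift a s0)"
    using assms adm_plan_shift unfolding feasible_def by blast
  fix hs i assume "hs \<noteq> [] \<and> hd hs = s1"
  moreover have "gbar M i \<le> condsum M (s0 # hs) (stg M (gcon M i) a x0)"
    using assms unfolding feasible_def by auto
  ultimately show "gbar M i \<le> condsum M hs (stg M (gcon M i) (plan_shift a s0) (zeta M x0 (a [s0]) s0))"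
    using condsum_Cons by simp
qed

lemma feasible_constraint: "feasible M x0 s0 a \<Longrightarrow> gbar M i \<le> plan_value (gcon M i) a x0 s0"
  unfolding feasible_def plan_value_def by auto

lemma adm_first_act: "adm M x0 a \<Longrightarrow> a [s0] \<in> adm_acts x0 s0"
  unfolding adm_def adm_acts_def by (erule allE[where x="[s0]"]) (simp add: xpath_def)

lemma finite_adm_acts: "finite (adm_acts x s)"
  unfolding adm_acts_def using finite_Act by simp

lemma adm_exists: "x \<in> Xs M \<Longrightarrow> \<exists>a. adm M x a"
  using feasible_exists unfolding feasible_def by blast

lemma adm_acts_nonempty: "x \<in> Xs M \<Longrightarrow> adm_acts x s \<noteq> {}"
  using adm_exists adm_first_act by blast

lemma supnorm_nonneg:
  assumes "bounded_payoff M h" "x \<in> Xs M"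
  shows "0 \<le> supnorm M h"
proof -
  obtain a where "a \<in> Act M" using adm_acts_nonempty[OF assms(2)] unfolding adm_acts_def by blast
  from abs_le_supnorm[OF assms this] show ?thesis by (rule order_trans[rotated]) simp
qed

end

section \<open>Multipliers\<close>

type_synonym ('s, 'a, 'i) mult = "'s list \<times> 'a list \<Rightarrow> 'i \<Rightarrow> real"

definition nonneg_mult :: "('s, 'a, 'i) mult \<Rightarrow> bool" where
  "nonneg_mult lam \<longleftrightarrow> (\<forall>h i. 0 \<le> lam h i)"

definition mult_head :: "('s, 'a, 'i::finite) mult \<Rightarrow> 's \<Rightarrow> real^'i" where
  "mult_head lam s0 = (\<chi> i. lam ([s0], []) i)"

definition mult_shift :: "('s, 'a, 'i) mult \<Rightarrow> 's \<Rightarrow> 'a \<Rightarrow> ('s, 'a, 'i) mult" where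
  "mult_shift lam s0 a0 = (\<lambda>h. lam (s0 # fst h, a0 # snd h))"

definition mult_glue :: "real^'i \<Rightarrow> ('a \<Rightarrow> 's \<Rightarrow> ('s, 'a, 'i) mult) \<Rightarrow> ('s, 'a, 'i) mult" where
  "mult_glue l \<mu> h = (case h of
      ([_], []) \<Rightarrow> (\<lambda>i. l $ i)
    | (_ # s1 # ss, a0 # as) \<Rightarrow> \<mu> a0 s1 (s1 # ss, as)
    | _ \<Rightarrow> (\<lambda>_. 0))"

lemma nonneg_multD: "nonneg_mult lam \<Longrightarrow> 0 \<le> lam h i"
  unfolding nonneg_mult_def by blast

lemma mult_head_nth [simp]: "mult_head lam s0 $ i = lam ([s0], []) i"
  by (simp add: mult_head_def)

lemma mult_head_in_Pos: "nonneg_mult lam \<Longrightarrow> mult_head lam s0 \<in> Pos"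
  unfolding Pos_def by (auto intro: nonneg_multD)

lemma nonneg_mult_shift: "nonneg_mult lam \<Longrightarrow> nonneg_mult (mult_shift lam s0 a0)"
  unfolding nonneg_mult_def mult_shift_def by auto

lemma mult_head_glue: "mult_head (mult_glue l \<mu>) s0 = l"
  unfolding mult_head_def mult_glue_def by (simp add: vec_lambda_eta)

lemma mult_shift_glue: "mult_shift (mult_glue l \<mu>) s0 a0 (s1 # ss, as) = \<mu> a0 s1 (s1 # ss, as)"
  unfolding mult_shift_def mult_glue_def by simp

lemma nonneg_mult_glue: "l \<in> Pos \<Longrightarrow> (\<And>a s1. nonneg_mult (\<mu> a s1)) \<Longrightarrow> nonneg_mult (mult_glue l \<mu>)"
  unfolding nonneg_mult_def mult_glue_def Pos_def
  by (auto split: list.split prod.split)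

context dual_problem
begin

definition mult_mass :: "nat \<Rightarrow> ('s, 'a, 'i) mult \<Rightarrow> 's \<Rightarrow> real" where
  "mult_mass t lam s = (\<Sum>h\<in>Hset M t. \<Sum>i\<in>UNIV. \<beta> ^ t * lam h i * pit M s (fst h))"

lemma Lambda_iff: "lam \<in> Lambda M s \<longleftrightarrow> nonneg_mult lam \<and> summable (\<lambda>t. mult_mass t lam s)"
  unfolding Lambda_def mult_mass_def nonneg_mult_def by (simp add: mult.assoc)

lemma Lambda_nonneg: "lam \<in> Lambda M s \<Longrightarrow> nonneg_mult lam"
  unfolding Lambda_iff by simp

lemma summable_mult_mass: "lam \<in> Lambda M s \<Longrightarrow> summable (\<lambda>t. mult_mass t lam s)"
  unfolding Lambda_iff by simp

lemma finite_Hset: "finite (Hset M t)"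
proof -
  have "Hset M t \<subseteq> {ss::'s list. length ss = Suc t} \<times> {as. set as \<subseteq> Act M \<and> length as = t}"
    unfolding Hset_def by auto
  moreover have "finite ({ss::'s list. length ss = Suc t} \<times> {as. set as \<subseteq> Act M \<and> length as = t})"
    using finite_lists_length_eq[of "UNIV::'s set" "Suc t"] finite_lists_length_eq[OF finite_Act] by simp
  ultimately show ?thesis by (rule finite_subset)
qed

lemma pit_nonneg: "0 \<le> pit M s ss"
  unfolding pit_def using pathprob_nonneg by simp

lemma pit_Cons:
  assumes "ss \<noteq> []"
  shows "pit M s0 (s0 # ss) = (\<Sum>s1\<in>UNIV. Q s0 s1 * pit M s1 ss)"
proof -
  obtain y ys where ss: "ss = y # ys" using assms by (cases ss) auto
  have "(\<Sum>s1\<in>UNIV. Q s0 s1 * pit M s1 ss) = (\<Sum>s1\<in>UNIV. if y = s1 then Q s0 s1 * pathprob Q y ys else 0)"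
    unfolding pit_def ss by (intro sum.cong) auto
  then show ?thesis using ss by (simp add: pit_def)
qed

lemma mult_mass_nonneg: "nonneg_mult lam \<Longrightarrow> 0 \<le> mult_mass t lam s"
  unfolding mult_mass_def using disc_pos pit_nonneg nonneg_multD
  by (intro sum_nonneg mult_nonneg_nonneg) auto

lemma mult_mass_cong:
  assumes "\<And>h. h \<in> Hset M t \<Longrightarrow> hd (fst h) = s \<Longrightarrow> lam h = lam' h"
  shows "mult_mass t lam s = mult_mass t lam' s"
  unfolding mult_mass_def
proof (intro sum.cong refl)
  fix h i assume "h \<in> Hset M t"
  then show "\<beta> ^ t * lam h i * pit M s (fst h) = \<beta> ^ t * lam' h i * pit M s (fst h)"
    using assms by (cases "hd (fst h) = s") (auto simp: pit_def)
qed

lemma Hset_Suc_hd: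
  "{h\<in>Hset M (Suc t). hd (fst h) = s0} = (\<lambda>(a0, h). (s0 # fst h, a0 # snd h)) ` (Act M \<times> Hset M t)"
proof
  show "{h\<in>Hset M (Suc t). hd (fst h) = s0} \<subseteq> (\<lambda>(a0, h). (s0 # fst h, a0 # snd h)) ` (Act M \<times> Hset M t)"
  proof
    fix h assume "h \<in> {h\<in>Hset M (Suc t). hd (fst h) = s0}"
    then obtain ss a0 as where "h = (s0 # ss, a0 # as)" "(ss, as) \<in> Hset M t" "a0 \<in> Act M"
      unfolding Hset_def by (cases h) (auto simp: length_Suc_conv)
    then show "h \<in> (\<lambda>(a0, h). (s0 # fst h, a0 # snd h)) ` (Act M \<times> Hset M t)"
      by (auto intro!: image_eqI[where x="(a0, (ss, as))"])
  qed
qed (auto simp: Hset_def)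

lemma mult_mass_Suc:
  "mult_mass (Suc t) lam s0 = \<beta> * (\<Sum>a0\<in>Act M. \<Sum>s1\<in>UNIV. Q s0 s1 * mult_mass t (mult_shift lam s0 a0) s1)"
proof -
  let ?G = "\<lambda>h. \<Sum>i\<in>UNIV. \<beta> ^ Suc t * lam h i * pit M s0 (fst h)"
  let ?f = "\<lambda>(a0, h). (s0 # fst h, a0 # snd h)"
  have "mult_mass (Suc t) lam s0 = sum ?G {h\<in>Hset M (Suc t). hd (fst h) = s0}"
    unfolding mult_mass_def by (rule sum.mono_neutral_right[OF finite_Hset]) (auto simp: pit_def Hset_def)
  also have "\<dots> = (\<Sum>p\<in>Act M \<times> Hset M t. ?G (?f p))"
    unfolding Hset_Suc_hd by (subst sum.reindex) (auto simp: inj_on_def comp_def)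
  also have "\<dots> = (\<Sum>a0\<in>Act M. \<Sum>h\<in>Hset M t. ?G (?f (a0, h)))"
    by (rule sum.cartesian_product')
  also have "\<dots> = (\<Sum>a0\<in>Act M. \<Sum>h\<in>Hset M t. \<Sum>i\<in>UNIV. \<Sum>s1\<in>UNIV.
      \<beta> * (Q s0 s1 * (\<beta> ^ t * mult_shift lam s0 a0 h i * pit M s1 (fst h))))"
  proof (intro sum.cong refl)
    fix a0 h i assume "h \<in> Hset M t"
    then have "fst h \<noteq> []" unfolding Hset_def by auto
    then show "\<beta> ^ Suc t * lam (?f (a0, h)) i * pit M s0 (fst (?f (a0, h))) =
        (\<Sum>s1\<in>UNIV. \<beta> * (Q s0 s1 * (\<beta> ^ t * mult_shift lam s0 a0 h i * pit M s1 (fst h))))"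
      by (simp add: pit_Cons mult_shift_def sum_distrib_left mult_ac)
  qed
  also have "\<dots> = (\<Sum>a0\<in>Act M. \<Sum>h\<in>Hset M t. \<Sum>s1\<in>UNIV. \<Sum>i\<in>UNIV.
      \<beta> * (Q s0 s1 * (\<beta> ^ t * mult_shift lam s0 a0 h i * pit M s1 (fst h))))"
    by (intro sum.cong refl sum.swap)
  also have "\<dots> = (\<Sum>a0\<in>Act M. \<Sum>s1\<in>UNIV. \<Sum>h\<in>Hset M t. \<Sum>i\<in>UNIV.
      \<beta> * (Q s0 s1 * (\<beta> ^ t * mult_shift lam s0 a0 h i * pit M s1 (fst h))))"
    by (intro sum.cong refl sum.swap)
  also have "\<dots> = \<beta> * (\<Sum>a0\<in>Act M. \<Sum>s1\<in>UNIV. Q s0 s1 * mult_mass t (mult_shift lam s0 a0) s1)"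
    unfolding mult_mass_def by (simp add: sum_distrib_left)
  finally show ?thesis .
qed

lemma mult_mass_shift_le:
  assumes "nonneg_mult lam" "a0 \<in> Act M"
  shows "\<beta> * (\<Sum>s1\<in>UNIV. Q s0 s1 * mult_mass t (mult_shift lam s0 a0) s1) \<le> mult_mass (Suc t) lam s0"
proof -
  have "0 \<le> Q s0 s * mult_mass t (mult_shift lam s0 a) s" for a s
    using Q_pos[of s0 s] mult_mass_nonneg[OF nonneg_mult_shift[OF assms(1)]] by simp
  then have "(\<Sum>s1\<in>UNIV. Q s0 s1 * mult_mass t (mult_shift lam s0 a0) s1)
      \<le> (\<Sum>a\<in>Act M. \<Sum>s1\<in>UNIV. Q s0 s1 * mult_mass t (mult_shift lam s0 a) s1)"
    by (intro member_le_sum[OF assms(2) _ finite_Act, where f="\<lambda>a. \<Sum>s1\<in>UNIV. _ a s1"] sum_nonneg)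
  then show ?thesis
    unfolding mult_mass_Suc using disc_pos by (simp add: mult_left_mono)
qed

lemma Lambda_mult_shift:
  assumes "lam \<in> Lambda M s0" "a0 \<in> Act M"
  shows "mult_shift lam s0 a0 \<in> Lambda M s1"
proof -
  have nonneg: "nonneg_mult (mult_shift lam s0 a0)" by (rule nonneg_mult_shift[OF Lambda_nonneg[OF assms(1)]])
  have "summable (\<lambda>t. mult_mass t (mult_shift lam s0 a0) s1)"
  proof (rule summable_comparison_test'[where N=0])
    show "summable (\<lambda>t. 1 / (\<beta> * Q s0 s1) * mult_mass (Suc t) lam s0)"
      using summable_mult_mass[OF assms(1)] by (intro summable_mult) (subst summable_Suc_iff)
    fix t
    have "Q s0 s1 * mult_mass t (mult_shift lam s0 a0) s1
        \<le> (\<Sum>s\<in>UNIV. Q s0 s * mult_mass t (mult_shift lam s0 a0) s)"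
      using Q_pos mult_mass_nonneg[OF nonneg] by (intro member_le_sum) (auto simp: less_imp_le)
    then have "\<beta> * (Q s0 s1 * mult_mass t (mult_shift lam s0 a0) s1) \<le> mult_mass (Suc t) lam s0"
      using mult_mass_shift_le[OF Lambda_nonneg[OF assms(1)] assms(2), of s0 t] disc_pos
      by (meson mult_left_mono less_imp_le order_trans)
    then show "norm (mult_mass t (mult_shift lam s0 a0) s1) \<le> 1 / (\<beta> * Q s0 s1) * mult_mass (Suc t) lam s0"
      using disc_pos Q_pos[of s0 s1] mult_mass_nonneg[OF nonneg] by (simp add: field_simps)
  qed
  then show ?thesis using nonneg Lambda_iff by blast
qed

lemma Lambda_mult_glue:
  assumes "l \<in> Pos" "\<And>a s1. \<mu> a s1 \<in> Lambda M s1"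
  shows "mult_glue l \<mu> \<in> Lambda M s0"
proof -
  have "mult_mass t (mult_shift (mult_glue l \<mu>) s0 a0) s1 = mult_mass t (\<mu> a0 s1) s1" for t a0 s1
    by (rule mult_mass_cong) (auto simp: Hset_def length_Suc_conv mult_shift_glue)
  then have "summable (\<lambda>t. mult_mass (Suc t) (mult_glue l \<mu>) s0)"
    unfolding mult_mass_Suc using assms(2) unfolding Lambda_iff
    by (auto intro!: summable_mult summable_sum)
  moreover have "nonneg_mult (mult_glue l \<mu>)"
    using assms Lambda_iff by (intro nonneg_mult_glue) auto
  ultimately show ?thesis
    unfolding Lambda_iff summable_Suc_iff[where f="\<lambda>t. mult_mass t (mult_glue l \<mu>) s0"] by simp
qed

lemma mult_head_sum_le_mass:
  assumes "nonneg_mult lam"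
  shows "(\<Sum>i\<in>UNIV. lam ([s0], []) i) \<le> mult_mass 0 lam s0"
proof -
  let ?G = "\<lambda>h. \<Sum>i\<in>UNIV. \<beta> ^ 0 * lam h i * pit M s0 (fst h)"
  have "([s0], []) \<in> Hset M 0" unfolding Hset_def by simp
  then have "?G ([s0], []) \<le> sum ?G (Hset M 0)"
    by (intro member_le_sum finite_Hset)
       (use nonneg_multD[OF assms] pit_nonneg in \<open>auto intro!: sum_nonneg mult_nonneg_nonneg\<close>)
  then show ?thesis unfolding mult_mass_def by (simp add: pit_def)
qed

lemma Lambda_zero: "(\<lambda>_ _. 0) \<in> Lambda M s"
  unfolding Lambda_iff nonneg_mult_def mult_mass_def by simp

lemma Lambda_convex_comb:
  assumes "l1 \<in> Lambda M s" "l2 \<in> Lambda M s" "0 \<le> u" "0 \<le> v"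
  shows "(\<lambda>h i. u * l1 h i + v * l2 h i) \<in> Lambda M s"
proof -
  have "mult_mass t (\<lambda>h i. u * l1 h i + v * l2 h i) s = u * mult_mass t l1 s + v * mult_mass t l2 s" for t
    unfolding mult_mass_def by (simp add: sum_distrib_left sum.distrib algebra_simps)
  then show ?thesis using assms unfolding Lambda_iff nonneg_mult_def
    by (auto intro!: summable_add summable_mult)
qed

end

section \<open>The Lagrangian\<close>

lemma hist_of_fst [simp]: "fst (hist_of a hs) = hs"
  by (simp add: hist_of_def)

lemma hist_of_single [simp]: "hist_of a [s0] = ([s0], [])"
  by (simp add: hist_of_def)

lemma hist_of_Cons:
  assumes "hs \<noteq> []"
  shows "hist_of a (s0 # hs) = (s0 # hs, a [s0] # snd (hist_of (\<lambda>h. a (s0 # h)) hs))"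
proof -
  obtain m where m: "length hs = Suc m" using assms by (cases hs) auto
  have "[0..<Suc m] = 0 # map Suc [0..<m]" by (simp add: upt_conv_Cons map_Suc_upt)
  then show ?thesis unfolding hist_of_def using m by simp
qed

lemma hist_of_cong:
  "hs \<noteq> [] \<Longrightarrow> (\<And>h. h \<noteq> [] \<Longrightarrow> hd h = hd hs \<Longrightarrow> a h = b h) \<Longrightarrow> hist_of a hs = hist_of b hs"
  unfolding hist_of_def by (auto simp: hd_take neq_Nil_conv intro!: map_cong)

context dual_problem
begin

definition weighted_value :: "real^'i \<Rightarrow> ('s list \<Rightarrow> 'a) \<Rightarrow> 'x \<Rightarrow> 's \<Rightarrow> real" where
  "weighted_value \<gamma> a x s = plan_value (rew M) a x s + (\<Sum>i\<in>UNIV. \<gamma> $ i * plan_value (gcon M i) a x s)"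

definition mult_term :: "('s list \<Rightarrow> 'a) \<Rightarrow> ('s, 'a, 'i) mult \<Rightarrow> 'x \<Rightarrow> 's \<Rightarrow> 's list \<Rightarrow> real" where
  "mult_term a lam x0 s0 ys = (\<Sum>i\<in>UNIV. lam (hist_of a (s0 # ys)) i *
      (condsum M (s0 # ys) (stg M (gcon M i) a x0) - gbar M i))"

definition mult_value :: "('s list \<Rightarrow> 'a) \<Rightarrow> ('s, 'a, 'i) mult \<Rightarrow> 'x \<Rightarrow> 's \<Rightarrow> real" where
  "mult_value a lam x0 s0 = disc_sum s0 (mult_term a lam x0 s0)"

definition slack_bound :: real where
  "slack_bound = (\<Sum>i\<in>UNIV. supnorm M (gcon M i) / (1 - \<beta>) + \<bar>gbar M i\<bar>)"

lemma hist_of_in_Hset: "adm M x0 a \<Longrightarrow> hist_of a (s0 # ys) \<in> Hset M (length ys)"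
  unfolding hist_of_def Hset_def using adm_in_Act by auto

lemma expect_hist_le_mult_mass:
  assumes "adm M x0 a" "nonneg_mult lam"
  shows "\<beta> ^ t * expect s0 t (\<lambda>ys. \<Sum>i\<in>UNIV. lam (hist_of a (s0 # ys)) i) \<le> mult_mass t lam s0"
proof -
  let ?G = "\<lambda>h. \<Sum>i\<in>UNIV. \<beta> ^ t * lam h i * pit M s0 (fst h)"
  have "\<beta> ^ t * expect s0 t (\<lambda>ys. \<Sum>i\<in>UNIV. lam (hist_of a (s0 # ys)) i) =
      (\<Sum>ys\<in>{ys. length ys = t}. ?G (hist_of a (s0 # ys)))"
    unfolding expect_def by (simp add: pit_def sum_distrib_left sum_distrib_right mult_ac)
  also have "\<dots> \<le> (\<Sum>h\<in>Hset M t. ?G h)"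
  proof (rule sum_inj_image_le)
    show "inj_on (\<lambda>ys. hist_of a (s0 # ys)) {ys. length ys = t}"
      by (rule inj_onI) (metis hist_of_fst list.inject)
    show "(\<lambda>ys. hist_of a (s0 # ys)) ` {ys. length ys = t} \<subseteq> Hset M t"
      using hist_of_in_Hset[OF assms(1)] by auto
    show "0 \<le> ?G h" for h
      using nonneg_multD[OF assms(2)] disc_pos pit_nonneg by (intro sum_nonneg mult_nonneg_nonneg) auto
  qed (rule finite_Hset)
  finally show ?thesis unfolding mult_mass_def .
qed

lemma slack_bound_ge:
  "x0 \<in> Xs M \<Longrightarrow> supnorm M (gcon M i) / (1 - \<beta>) + \<bar>gbar M i\<bar> \<le> slack_bound"
  unfolding slack_bound_def
  by (rule member_le_sum) (use supnorm_nonneg[OF bounded_gcon] disc_less_1 in auto)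

lemma slack_bound_nonneg: "x0 \<in> Xs M \<Longrightarrow> 0 \<le> slack_bound"
  using slack_bound_ge[of x0 undefined] supnorm_nonneg[OF bounded_gcon, of x0 undefined] disc_less_1
  by (smt (verit) divide_nonneg_pos)

lemma mult_term_abs_le:
  assumes "adm M x0 a" "x0 \<in> Xs M" "nonneg_mult lam"
  shows "\<bar>mult_term a lam x0 s0 ys\<bar> \<le> slack_bound * (\<Sum>i\<in>UNIV. lam (hist_of a (s0 # ys)) i)"
proof -
  have "\<bar>lam (hist_of a (s0 # ys)) i * (condsum M (s0 # ys) (stg M (gcon M i) a x0) - gbar M i)\<bar>
      \<le> slack_bound * lam (hist_of a (s0 # ys)) i" for i
  proof -
    have "\<bar>condsum M (s0 # ys) (stg M (gcon M i) a x0)\<bar> \<le> supnorm M (gcon M i) / (1 - \<beta>)"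
      by (rule condsum_abs_le[OF bounded_gcon assms(1,2)]) simp
    then have "\<bar>condsum M (s0 # ys) (stg M (gcon M i) a x0) - gbar M i\<bar>
        \<le> supnorm M (gcon M i) / (1 - \<beta>) + \<bar>gbar M i\<bar>"
      using abs_triangle_ineq4[of "condsum M (s0 # ys) (stg M (gcon M i) a x0)" "gbar M i"] by linarith
    also have "\<dots> \<le> slack_bound" by (rule slack_bound_ge[OF assms(2)])
    finally have "\<bar>condsum M (s0 # ys) (stg M (gcon M i) a x0) - gbar M i\<bar> \<le> slack_bound" .
    from mult_left_mono[OF this nonneg_multD[OF assms(3)]] show ?thesis
      by (simp add: abs_mult abs_of_nonneg[OF nonneg_multD[OF assms(3)]] mult.commute)
  qed
  then show ?thesis
    unfolding mult_term_def sum_distrib_left by (intro order_trans[OF sum_abs] sum_mono)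
qed

lemma mult_term_expect_le:
  assumes "adm M x0 a" "x0 \<in> Xs M" "nonneg_mult lam"
  shows "\<beta> ^ n * expect s0 n (\<lambda>ys. \<bar>mult_term a lam x0 s0 ys\<bar>) \<le> slack_bound * mult_mass n lam s0"
proof -
  have "expect s0 n (\<lambda>ys. \<bar>mult_term a lam x0 s0 ys\<bar>)
      \<le> slack_bound * expect s0 n (\<lambda>ys. \<Sum>i\<in>UNIV. lam (hist_of a (s0 # ys)) i)"
    unfolding expect_cmult[symmetric] by (rule expect_mono) (rule mult_term_abs_le[OF assms])
  then have "\<beta> ^ n * expect s0 n (\<lambda>ys. \<bar>mult_term a lam x0 s0 ys\<bar>)
      \<le> slack_bound * (\<beta> ^ n * expect s0 n (\<lambda>ys. \<Sum>i\<in>UNIV. lam (hist_of a (s0 # ys)) i))"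
    using disc_pos by (simp add: mult_left_mono mult.left_commute)
  also have "\<dots> \<le> slack_bound * mult_mass n lam s0"
    by (rule mult_left_mono[OF expect_hist_le_mult_mass[OF assms(1,3)] slack_bound_nonneg[OF assms(2)]])
  finally show ?thesis .
qed

lemma disc_summable_mult_term:
  assumes "adm M x0 a" "x0 \<in> Xs M" "lam \<in> Lambda M s0"
  shows "disc_summable s0 (mult_term a lam x0 s0)"
  unfolding disc_summable_def
proof (rule summable_comparison_test'[where N=0])
  show "summable (\<lambda>n. slack_bound * mult_mass n lam s0)"
    using assms(3) unfolding Lambda_iff by (intro summable_mult) simp
  show "norm (\<beta> ^ n * expect s0 n (\<lambda>ys. \<bar>mult_term a lam x0 s0 ys\<bar>)) \<le> slack_bound * mult_mass n lam s0" for n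
    using mult_term_expect_le[OF assms(1,2)] assms(3) disc_pos expect_nonneg[of "\<lambda>ys. \<bar>_ ys\<bar>"]
    unfolding Lambda_iff by (simp add: abs_mult)
qed

lemma Lag_eq:
  assumes "adm M x0 a" "x0 \<in> Xs M" "lam \<in> Lambda M s0"
  shows "Lag M a lam \<gamma> x0 s0 = weighted_value \<gamma> a x0 s0 + mult_value a lam x0 s0"
proof -
  let ?r = "\<lambda>ys. stg M (rew M) a x0 (s0 # ys)"
  let ?g = "\<lambda>i ys. \<gamma> $ i * stg M (gcon M i) a x0 (s0 # ys)"
  have summ_r: "disc_summable s0 ?r"
    using stg_abs_le_supnorm[OF bounded_rew assms(1,2)]
    by (intro disc_summable_bounded[where C="supnorm M (rew M)"]) simp
  have summ_g0: "disc_summable s0 (\<lambda>ys. stg M (gcon M i) a x0 (s0 # ys))" for i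
    using stg_abs_le_supnorm[OF bounded_gcon assms(1,2)]
    by (intro disc_summable_bounded[where C="supnorm M (gcon M i)"]) simp
  then have summ_g: "disc_summable s0 (?g i)" for i by (rule disc_summable_cmult)
  have "Lag M a lam \<gamma> x0 s0 = disc_sum s0 (\<lambda>ys. (?r ys + (\<Sum>i\<in>UNIV. ?g i ys)) + mult_term a lam x0 s0 ys)"
    unfolding Lag_def disc_sum_def expect_def mult_term_def ..
  also have "\<dots> = disc_sum s0 ?r + (\<Sum>i\<in>UNIV. disc_sum s0 (?g i)) + mult_value a lam x0 s0"
    using summ_r summ_g disc_summable_mult_term[OF assms]
    by (simp add: mult_value_def disc_sum_add disc_sum_sum disc_summable_add disc_summable_sum)
  also have "\<dots> = weighted_value \<gamma> a x0 s0 + mult_value a lam x0 s0"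
    unfolding weighted_value_def plan_value_def condsum_eq_disc_sum
    by (simp add: disc_sum_cmult[OF summ_g0])
  finally show ?thesis .
qed

lemma mult_value_nonneg:
  assumes "feasible M x0 s0 a" "x0 \<in> Xs M" "lam \<in> Lambda M s0"
  shows "0 \<le> mult_value a lam x0 s0"
  unfolding mult_value_def
proof (rule disc_sum_nonneg)
  show "disc_summable s0 (mult_term a lam x0 s0)"
    using assms disc_summable_mult_term unfolding feasible_def by blast
  show "0 \<le> mult_term a lam x0 s0 ys" for ys
    unfolding mult_term_def using assms(1) nonneg_multD[OF Lambda_nonneg[OF assms(3)]] unfolding feasible_def
    by (intro sum_nonneg mult_nonneg_nonneg) auto
qed

lemma mult_value_le:
  assumes "adm M x0 a" "x0 \<in> Xs M" "lam \<in> Lambda M s0"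
  shows "mult_value a lam x0 s0 \<le> slack_bound * (\<Sum>t. mult_mass t lam s0)"
proof -
  note summ = summable_mult_mass[OF assms(3)]
  have "\<beta> ^ n * expect s0 n (mult_term a lam x0 s0) \<le> slack_bound * mult_mass n lam s0" for n
  proof -
    have "expect s0 n (mult_term a lam x0 s0) \<le> expect s0 n (\<lambda>ys. \<bar>mult_term a lam x0 s0 ys\<bar>)"
      by (rule expect_mono) simp
    then show ?thesis
      using mult_term_expect_le[OF assms(1,2) Lambda_nonneg[OF assms(3)]] disc_pos
      by (meson mult_left_mono order_trans zero_le_power less_imp_le)
  qed
  then have "mult_value a lam x0 s0 \<le> (\<Sum>t. slack_bound * mult_mass t lam s0)"
    unfolding mult_value_def disc_sum_def
    by (intro suminf_le disc_summable_summable disc_summable_mult_term[OF assms] summable_mult summ)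
  then show ?thesis using suminf_mult[OF summ] by simp
qed

lemma mult_value_zero: "mult_value a (\<lambda>_ _. 0) x0 s0 = 0"
  unfolding mult_value_def mult_term_def using disc_sum_const[of s0 0] by simp

lemma mult_value_convex_comb:
  assumes "adm M x0 a" "x0 \<in> Xs M" "l1 \<in> Lambda M s0" "l2 \<in> Lambda M s0"
  shows "mult_value a (\<lambda>h i. u * l1 h i + v * l2 h i) x0 s0 = u * mult_value a l1 x0 s0 + v * mult_value a l2 x0 s0"
proof -
  have "mult_term a (\<lambda>h i. u * l1 h i + v * l2 h i) x0 s0
      = (\<lambda>ys. u * mult_term a l1 x0 s0 ys + v * mult_term a l2 x0 s0 ys)"
    unfolding mult_term_def sum_distrib_left sum.distrib[symmetric]
    by (intro ext sum.cong) (auto simp: algebra_simps)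
  then show ?thesis unfolding mult_value_def
    using disc_summable_mult_term[OF assms(1,2,3)] disc_summable_mult_term[OF assms(1,2,4)]
    by (simp add: disc_sum_add disc_summable_cmult disc_sum_cmult)
qed

lemma mult_value_rec:
  assumes "adm M x0 a" "x0 \<in> Xs M" "lam \<in> Lambda M s0"
  shows "mult_value a lam x0 s0 = (\<Sum>i\<in>UNIV. lam ([s0], []) i * (plan_value (gcon M i) a x0 s0 - gbar M i)) +
     \<beta> * (\<Sum>s1\<in>UNIV. Q s0 s1 *
        mult_value (plan_shift a s0) (mult_shift lam s0 (a [s0])) (zeta M x0 (a [s0]) s0) s1)"
proof -
  have "mult_term a lam x0 s0 (s1 # ys) =
      mult_term (plan_shift a s0) (mult_shift lam s0 (a [s0])) (zeta M x0 (a [s0]) s0) s1 ys" for s1 ys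
    unfolding mult_term_def mult_shift_def
    by (simp add: hist_of_Cons[of "s1 # ys"] condsum_Cons[of "s1 # ys"] plan_shift_def)
  moreover have "mult_term a lam x0 s0 [] = (\<Sum>i\<in>UNIV. lam ([s0], []) i * (plan_value (gcon M i) a x0 s0 - gbar M i))"
    unfolding mult_term_def plan_value_def by simp
  ultimately show ?thesis unfolding mult_value_def
    by (subst disc_sum_rec[OF disc_summable_mult_term[OF assms]]) simp
qed

text \<open>\<open>l\<close> is the multiplier of the current history.\<close>
definition stage :: "'x \<Rightarrow> 'a \<Rightarrow> 's \<Rightarrow> real^'i \<Rightarrow> real^'i \<Rightarrow> real" where
  "stage x a s \<gamma> l = rew M x a s
     + (\<Sum>i\<in>UNIV. \<gamma> $ i * gcon M i x a s + l $ i * (gcon M i x a s - gbar M i))"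

lemma weighted_value_rec:
  assumes "adm M x0 a" "x0 \<in> Xs M"
  shows "weighted_value \<gamma> a x0 s0 + (\<Sum>i\<in>UNIV. l $ i * (plan_value (gcon M i) a x0 s0 - gbar M i))
    = stage x0 (a [s0]) s0 \<gamma> l +
      \<beta> * (\<Sum>s1\<in>UNIV. Q s0 s1 * weighted_value (\<gamma> + l) (plan_shift a s0) (zeta M x0 (a [s0]) s0) s1)"
proof -
  let ?a0 = "a [s0]" and ?x1 = "zeta M x0 (a [s0]) s0" and ?a' = "plan_shift a s0"
  let ?Vr = "\<lambda>s1. plan_value (rew M) ?a' ?x1 s1" and ?Vg = "\<lambda>i s1. plan_value (gcon M i) ?a' ?x1 s1"
  have "weighted_value \<gamma> a x0 s0 + (\<Sum>i\<in>UNIV. l $ i * (plan_value (gcon M i) a x0 s0 - gbar M i))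
    = (rew M x0 ?a0 s0 + \<beta> * (\<Sum>s1\<in>UNIV. Q s0 s1 * ?Vr s1))
      + ((\<Sum>i\<in>UNIV. \<gamma> $ i * (gcon M i x0 ?a0 s0 + \<beta> * (\<Sum>s1\<in>UNIV. Q s0 s1 * ?Vg i s1))) +
         (\<Sum>i\<in>UNIV. l $ i * ((gcon M i x0 ?a0 s0 + \<beta> * (\<Sum>s1\<in>UNIV. Q s0 s1 * ?Vg i s1)) - gbar M i)))"
    unfolding weighted_value_def
    using plan_value_rec[OF bounded_rew assms] plan_value_rec[OF bounded_gcon assms] by (simp add: add.assoc)
  also have "\<dots> = (rew M x0 ?a0 s0 + \<beta> * (\<Sum>s1\<in>UNIV. Q s0 s1 * ?Vr s1))
      + ((\<Sum>i\<in>UNIV. \<gamma> $ i * gcon M i x0 ?a0 s0 + l $ i * (gcon M i x0 ?a0 s0 - gbar M i)) +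
         \<beta> * (\<Sum>s1\<in>UNIV. Q s0 s1 * (\<Sum>i\<in>UNIV. (\<gamma> $ i + l $ i) * ?Vg i s1)))"
    by (subst sum_weighted_rec_regroup[where \<gamma>="\<lambda>i. \<gamma> $ i" and l="\<lambda>i. l $ i"]) (rule refl)
  also have "\<dots> = stage x0 ?a0 s0 \<gamma> l + \<beta> * (\<Sum>s1\<in>UNIV. Q s0 s1 * weighted_value (\<gamma> + l) ?a' ?x1 s1)"
    unfolding stage_def weighted_value_def by (simp add: sum.distrib distrib_left algebra_simps)
  finally show ?thesis .
qed

lemma Lag_rec:
  assumes "adm M x0 a" "x0 \<in> Xs M" "lam \<in> Lambda M s0"
  shows "Lag M a lam \<gamma> x0 s0 = stage x0 (a [s0]) s0 \<gamma> (mult_head lam s0) +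
     \<beta> * (\<Sum>s1\<in>UNIV. Q s0 s1 * Lag M (plan_shift a s0) (mult_shift lam s0 (a [s0]))
        (\<gamma> + mult_head lam s0) (zeta M x0 (a [s0]) s0) s1)"
proof -
  let ?a' = "plan_shift a s0" and ?x1 = "zeta M x0 (a [s0]) s0"
    and ?l = "mult_head lam s0" and ?l' = "mult_shift lam s0 (a [s0])"
  have x1: "?x1 \<in> Xs M" using zeta_Xs[OF assms(2) adm_in_Act[OF assms(1)]] by simp
  have Lag': "Lag M ?a' ?l' (\<gamma> + ?l) ?x1 s1 = weighted_value (\<gamma> + ?l) ?a' ?x1 s1 + mult_value ?a' ?l' ?x1 s1"
    for s1
    using Lag_eq[OF adm_plan_shift[OF assms(1)] x1 Lambda_mult_shift[OF assms(3) adm_in_Act[OF assms(1)]]]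
    by simp
  have "Lag M a lam \<gamma> x0 s0 = weighted_value \<gamma> a x0 s0
      + (\<Sum>i\<in>UNIV. ?l $ i * (plan_value (gcon M i) a x0 s0 - gbar M i))
      + \<beta> * (\<Sum>s1\<in>UNIV. Q s0 s1 * mult_value ?a' ?l' ?x1 s1)"
    unfolding Lag_eq[OF assms] mult_value_rec[OF assms] by simp
  also have "\<dots> = stage x0 (a [s0]) s0 \<gamma> ?l + \<beta> * (\<Sum>s1\<in>UNIV. Q s0 s1 * Lag M ?a' ?l' (\<gamma> + ?l) ?x1 s1)"
    unfolding weighted_value_rec[OF assms(1,2)] Lag'
    by (simp add: distrib_left sum.distrib)
  finally show ?thesis .
qed

lemma Lag_cong_plan:
  assumes "\<And>h. h \<noteq> [] \<Longrightarrow> hd h = s1 \<Longrightarrow> a h = b h"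
  shows "Lag M a lam \<gamma> x s1 = Lag M b lam \<gamma> x s1"
proof -
  have agree: "\<And>h. h \<noteq> [] \<Longrightarrow> hd h = hd (s1 # ys) \<Longrightarrow> a h = b h" for ys using assms by simp
  have "stg M f a x (s1 # ys) = stg M f b x (s1 # ys)" for f ys by (rule stg_cong[OF _ agree]) simp
  moreover have "hist_of a (s1 # ys) = hist_of b (s1 # ys)" for ys by (rule hist_of_cong[OF _ agree]) simp
  moreover have "condsum M (s1 # ys) (stg M f a x) = condsum M (s1 # ys) (stg M f b x)" for f ys
    by (rule condsum_cong[OF _ agree]) simp
  ultimately show ?thesis unfolding Lag_def by simp
qed

lemma Lag_cong_mult:
  assumes "\<And>ss as. ss \<noteq> [] \<Longrightarrow> hd ss = s1 \<Longrightarrow> lam (ss, as) = lam' (ss, as)"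
  shows "Lag M a lam \<gamma> x s1 = Lag M a lam' \<gamma> x s1"
proof -
  have "lam (hist_of a (s1 # ys)) = lam' (hist_of a (s1 # ys))" for ys
    using assms[of "s1 # ys" "snd (hist_of a (s1 # ys))"] by (simp add: hist_of_def)
  then show ?thesis unfolding Lag_def by simp
qed

section \<open>The dual value\<close>

definition Lag_sup :: "('s, 'a, 'i) mult \<Rightarrow> real^'i \<Rightarrow> 'x \<Rightarrow> 's \<Rightarrow> real" where
  "Lag_sup lam \<gamma> x s = (SUP a\<in>{a. adm M x a}. Lag M a lam \<gamma> x s)"

definition value_bound :: "real^'i \<Rightarrow> real" where
  "value_bound \<gamma> = (supnorm M (rew M) + (\<Sum>i\<in>UNIV. \<gamma> $ i * supnorm M (gcon M i))) / (1 - \<beta>)"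

lemma weighted_value_abs_le:
  assumes "adm M x a" "x \<in> Xs M" "\<gamma> \<in> Pos"
  shows "\<bar>weighted_value \<gamma> a x s\<bar> \<le> value_bound \<gamma>"
proof -
  have "\<bar>\<gamma> $ i * plan_value (gcon M i) a x s\<bar> \<le> \<gamma> $ i * supnorm M (gcon M i) / (1 - \<beta>)" for i
    using mult_left_mono[OF plan_value_abs_le[OF bounded_gcon assms(1,2)] Pos_nonneg[OF assms(3)]]
    by (simp add: abs_mult Pos_nonneg[OF assms(3)])
  then have "\<bar>\<Sum>i\<in>UNIV. \<gamma> $ i * plan_value (gcon M i) a x s\<bar>
      \<le> (\<Sum>i\<in>UNIV. \<gamma> $ i * supnorm M (gcon M i)) / (1 - \<beta>)"
    unfolding sum_divide_distrib by (intro order_trans[OF sum_abs] sum_mono)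
  moreover have "\<bar>plan_value (rew M) a x s\<bar> \<le> supnorm M (rew M) / (1 - \<beta>)"
    by (rule plan_value_abs_le[OF bounded_rew assms(1,2)])
  ultimately show ?thesis
    unfolding weighted_value_def value_bound_def add_divide_distrib
    using abs_triangle_ineq[of "plan_value (rew M) a x s" "\<Sum>i\<in>UNIV. \<gamma> $ i * plan_value (gcon M i) a x s"]
    by linarith
qed

lemma Lag_le:
  assumes "adm M x a" "x \<in> Xs M" "lam \<in> Lambda M s" "\<gamma> \<in> Pos"
  shows "Lag M a lam \<gamma> x s \<le> value_bound \<gamma> + slack_bound * (\<Sum>t. mult_mass t lam s)"
proof -
  have "weighted_value \<gamma> a x s \<le> value_bound \<gamma>"
    using weighted_value_abs_le[OF assms(1,2,4)] by (simp add: abs_le_iff)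
  then show ?thesis using Lag_eq[OF assms(1-3)] mult_value_le[OF assms(1-3)] by simp
qed

lemma bdd_above_Lag:
  "x \<in> Xs M \<Longrightarrow> lam \<in> Lambda M s \<Longrightarrow> \<gamma> \<in> Pos \<Longrightarrow> bdd_above ((\<lambda>a. Lag M a lam \<gamma> x s) ` {a. adm M x a})"
  by (rule bdd_aboveI2[where M="value_bound \<gamma> + slack_bound * (\<Sum>t. mult_mass t lam s)"])
     (use Lag_le in auto)

lemma Lag_le_Lag_sup:
  "adm M x a \<Longrightarrow> x \<in> Xs M \<Longrightarrow> lam \<in> Lambda M s \<Longrightarrow> \<gamma> \<in> Pos \<Longrightarrow> Lag M a lam \<gamma> x s \<le> Lag_sup lam \<gamma> x s"
  unfolding Lag_sup_def by (rule cSUP_upper[OF _ bdd_above_Lag]) auto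

lemma Lag_sup_le:
  "x \<in> Xs M \<Longrightarrow> (\<And>a. adm M x a \<Longrightarrow> Lag M a lam \<gamma> x s \<le> c) \<Longrightarrow> Lag_sup lam \<gamma> x s \<le> c"
  unfolding Lag_sup_def using adm_exists by (intro cSUP_least) auto

lemma Lag_sup_approx:
  assumes "x \<in> Xs M" "lam \<in> Lambda M s" "\<gamma> \<in> Pos" "0 < e"
  obtains a where "adm M x a" "Lag_sup lam \<gamma> x s < Lag M a lam \<gamma> x s + e"
proof -
  have "Lag_sup lam \<gamma> x s - e < Lag_sup lam \<gamma> x s" using assms(4) by simp
  then obtain a where "adm M x a" "Lag_sup lam \<gamma> x s - e < Lag M a lam \<gamma> x s"
    unfolding Lag_sup_def[of lam \<gamma> x s]
    by (subst (asm) less_cSUP_iff[OF _ bdd_above_Lag[OF assms(1-3)]]) (use adm_exists[OF assms(1)] in auto)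
  then show ?thesis using that by simp
qed

lemma weighted_value_le_Lag_sup:
  assumes "feasible M x s a" "x \<in> Xs M" "lam \<in> Lambda M s" "\<gamma> \<in> Pos"
  shows "weighted_value \<gamma> a x s \<le> Lag_sup lam \<gamma> x s"
proof -
  have "adm M x a" using assms(1) unfolding feasible_def by simp
  then show ?thesis
    using Lag_le_Lag_sup[OF _ assms(2-4)] Lag_eq[OF _ assms(2,3)] mult_value_nonneg[OF assms(1-3)]
    by fastforce
qed

lemma neg_value_bound_le_Lag_sup:
  assumes "x \<in> Xs M" "\<gamma> \<in> Pos" "lam \<in> Lambda M s"
  shows "- value_bound \<gamma> \<le> Lag_sup lam \<gamma> x s"
proof -
  obtain a where a: "feasible M x s a" using feasible_exists[OF assms(1)] by blast
  then have "- value_bound \<gamma> \<le> weighted_value \<gamma> a x s"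
    using weighted_value_abs_le[OF _ assms(1,2), of a s] unfolding feasible_def by (simp add: abs_le_iff)
  also have "\<dots> \<le> Lag_sup lam \<gamma> x s" by (rule weighted_value_le_Lag_sup[OF a assms(1,3,2)])
  finally show ?thesis .
qed

lemma Dval_eq_INF: "Dval M \<gamma> x s = (INF lam\<in>Lambda M s. Lag_sup lam \<gamma> x s)"
  unfolding Dval_def Lag_sup_def ..

lemma bdd_below_Lag_sup:
  "x \<in> Xs M \<Longrightarrow> \<gamma> \<in> Pos \<Longrightarrow> bdd_below ((\<lambda>lam. Lag_sup lam \<gamma> x s) ` Lambda M s)"
  by (rule bdd_belowI2[where m="- value_bound \<gamma>"]) (rule neg_value_bound_le_Lag_sup)

lemma Dval_le_Lag_sup:
  "x \<in> Xs M \<Longrightarrow> \<gamma> \<in> Pos \<Longrightarrow> lam \<in> Lambda M s \<Longrightarrow> Dval M \<gamma> x s \<le> Lag_sup lam \<gamma> x s"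
  unfolding Dval_eq_INF by (rule cINF_lower[OF bdd_below_Lag_sup])

lemma le_Dval: "(\<And>lam. lam \<in> Lambda M s \<Longrightarrow> c \<le> Lag_sup lam \<gamma> x s) \<Longrightarrow> c \<le> Dval M \<gamma> x s"
  unfolding Dval_eq_INF using Lambda_zero by (intro cINF_greatest) auto

lemma Dval_approx:
  assumes "x \<in> Xs M" "\<gamma> \<in> Pos" "0 < e"
  obtains lam where "lam \<in> Lambda M s" "Lag_sup lam \<gamma> x s < Dval M \<gamma> x s + e"
proof -
  have "Dval M \<gamma> x s < Dval M \<gamma> x s + e" using assms(3) by simp
  then show ?thesis
    using that unfolding Dval_eq_INF[of \<gamma> x s]
    by (subst (asm) cINF_less_iff[OF _ bdd_below_Lag_sup[OF assms(1,2)]]) (auto intro: Lambda_zero)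
qed

lemma neg_value_bound_le_Dval: "x \<in> Xs M \<Longrightarrow> \<gamma> \<in> Pos \<Longrightarrow> - value_bound \<gamma> \<le> Dval M \<gamma> x s"
  by (rule le_Dval) (rule neg_value_bound_le_Lag_sup)

lemma Dval_le_value_bound:
  assumes "x \<in> Xs M" "\<gamma> \<in> Pos"
  shows "Dval M \<gamma> x s \<le> value_bound \<gamma>"
proof -
  have "Dval M \<gamma> x s \<le> Lag_sup (\<lambda>_ _. 0) \<gamma> x s" by (rule Dval_le_Lag_sup[OF assms Lambda_zero])
  also have "\<dots> \<le> value_bound \<gamma>"
  proof (rule Lag_sup_le[OF assms(1)])
    fix a assume "adm M x a"
    then show "Lag M a (\<lambda>_ _. 0) \<gamma> x s \<le> value_bound \<gamma>"
      using Lag_eq[OF _ assms(1) Lambda_zero] weighted_value_abs_le[OF _ assms] mult_value_zero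
      by (simp add: abs_le_iff)
  qed
  finally show ?thesis .
qed

lemma weighted_value_le_Dval:
  "feasible M x s a \<Longrightarrow> x \<in> Xs M \<Longrightarrow> \<gamma> \<in> Pos \<Longrightarrow> weighted_value \<gamma> a x s \<le> Dval M \<gamma> x s"
  by (rule le_Dval) (rule weighted_value_le_Lag_sup)

definition plan_glue :: "'a \<Rightarrow> ('s \<Rightarrow> 's list \<Rightarrow> 'a) \<Rightarrow> ('s list \<Rightarrow> 'a) \<Rightarrow> 's \<Rightarrow> 's list \<Rightarrow> 'a" where
  "plan_glue a0 b base s0 hs =
    (if hs = [s0] then a0 else if hs \<noteq> [] \<and> hd hs = s0 then b (hd (tl hs)) (tl hs) else base hs)"

lemma plan_glue_first: "plan_glue a0 b base s0 [s0] = a0"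
  unfolding plan_glue_def by simp

lemma plan_shift_glue: "h \<noteq> [] \<Longrightarrow> hd h = s1 \<Longrightarrow> plan_shift (plan_glue a0 b base s0) s0 h = b s1 h"
  unfolding plan_shift_def plan_glue_def by auto

text \<open>Histories not starting in \<open>s0\<close> are irrelevant for the Lagrangian at \<open>s0\<close>, but
  admissibility quantifies over all histories, so they follow the admissible plan \<open>base\<close>.\<close>
lemma adm_plan_glue:
  assumes a0: "a0 \<in> adm_acts x0 s0" and b: "\<And>s1. adm M (zeta M x0 a0 s0) (b s1)" and base: "adm M x0 base"
  shows "adm M x0 (plan_glue a0 b base s0)"
  unfolding adm_def
proof (intro allI impI)
  let ?a = "plan_glue a0 b base s0"
  fix hs :: "'s list" assume hs: "hs \<noteq> []"
  consider "hs = [s0]" | hs' where "hs = s0 # hs'" "hs' \<noteq> []" | "hd hs \<noteq> s0"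
    using hs by (cases hs) auto
  then show "?a hs \<in> Act M \<and> 0 \<le> pcon M (xpath M ?a x0 hs) (?a hs) (last hs)"
  proof cases
    case 1
    then show ?thesis using a0 by (simp add: plan_glue_first adm_acts_def xpath_def)
  next
    case 2
    have "xpath M ?a x0 hs = xpath M (plan_shift ?a s0) (zeta M x0 a0 s0) hs'"
      unfolding 2 using xpath_Cons[OF 2(2), of ?a x0 s0] by (simp add: plan_glue_first)
    also have "\<dots> = xpath M (b (hd hs')) (zeta M x0 a0 s0) hs'"
      by (rule xpath_cong[OF 2(2)]) (rule plan_shift_glue)
    finally show ?thesis
      using b[of "hd hs'"] 2 unfolding adm_def by (auto simp: plan_glue_def)
  next
    case 3
    have "xpath M ?a x0 hs = xpath M base x0 hs"
      by (rule xpath_cong[OF hs]) (use 3 in \<open>auto simp: plan_glue_def\<close>)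
    then show ?thesis using base hs 3 unfolding adm_def by (auto simp: plan_glue_def)
  qed
qed

text \<open>Gluing \<open>\<epsilon>\<close>-optimal continuation plans behind the action \<open>a0\<close> yields a plan whose
  Lagrangian is close to the right-hand side, by \<open>Lag_rec\<close>.\<close>
lemma stage_plus_Lag_sup_le:
  assumes lam: "lam \<in> Lambda M s0" and x0: "x0 \<in> Xs M" and a0: "a0 \<in> adm_acts x0 s0" and \<gamma>: "\<gamma> \<in> Pos"
  shows "stage x0 a0 s0 \<gamma> (mult_head lam s0) +
    \<beta> * (\<Sum>s1\<in>UNIV. Q s0 s1 * Lag_sup (mult_shift lam s0 a0) (\<gamma> + mult_head lam s0) (zeta M x0 a0 s0) s1)
    \<le> Lag_sup lam \<gamma> x0 s0"
proof (rule field_le_epsilon)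
  fix e :: real assume e: "0 < e"
  define x1 l l' where "x1 = zeta M x0 a0 s0" and "l = mult_head lam s0" and "l' = mult_shift lam s0 a0"
  have a0_Act: "a0 \<in> Act M" using a0 unfolding adm_acts_def by simp
  have x1: "x1 \<in> Xs M" unfolding x1_def using zeta_Xs[OF x0 a0_Act] .
  have l': "l' \<in> Lambda M s1" for s1 unfolding l'_def by (rule Lambda_mult_shift[OF lam a0_Act])
  have \<gamma>l: "\<gamma> + l \<in> Pos"
    unfolding l_def by (rule Pos_add[OF \<gamma> mult_head_in_Pos[OF Lambda_nonneg[OF lam]]])
  have "\<exists>b. adm M x1 b \<and> Lag_sup l' (\<gamma> + l) x1 s1 < Lag M b l' (\<gamma> + l) x1 s1 + e" for s1
    using Lag_sup_approx[OF x1 l' \<gamma>l e] by metis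
  then obtain b where b: "\<And>s1. adm M x1 (b s1)" "\<And>s1. Lag_sup l' (\<gamma> + l) x1 s1 < Lag M (b s1) l' (\<gamma> + l) x1 s1 + e"
    by metis
  obtain base where base: "adm M x0 base" using adm_exists[OF x0] by blast
  define a where "a = plan_glue a0 b base s0"
  have adm: "adm M x0 a" unfolding a_def by (rule adm_plan_glue[OF a0 b(1)[unfolded x1_def] base])
  have Lag_a: "Lag M a lam \<gamma> x0 s0 = stage x0 a0 s0 \<gamma> l + \<beta> * (\<Sum>s1\<in>UNIV. Q s0 s1 * Lag M (b s1) l' (\<gamma> + l) x1 s1)"
  proof -
    have first: "a [s0] = a0" unfolding a_def by (rule plan_glue_first)
    have "Lag M (plan_shift a s0) l' (\<gamma> + l) x1 s1 = Lag M (b s1) l' (\<gamma> + l) x1 s1" for s1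
      unfolding a_def by (intro Lag_cong_plan plan_shift_glue)
    then show ?thesis unfolding Lag_rec[OF adm x0 lam] first l_def l'_def x1_def by simp
  qed
  have "stage x0 a0 s0 \<gamma> l + \<beta> * (\<Sum>s1\<in>UNIV. Q s0 s1 * Lag_sup l' (\<gamma> + l) x1 s1)
      \<le> Lag M a lam \<gamma> x0 s0 + \<beta> * e"
    using disc_step_le_add[of "\<lambda>s1. Lag_sup l' (\<gamma> + l) x1 s1" "\<lambda>s1. Lag M (b s1) l' (\<gamma> + l) x1 s1" e s0] b(2)
    unfolding Lag_a by (simp add: less_imp_le)
  also have "\<dots> \<le> Lag_sup lam \<gamma> x0 s0 + e"
    using Lag_le_Lag_sup[OF adm x0 lam \<gamma>] disc_less_1 e by (simp add: mult_less_cancel_right2 less_imp_le add_mono)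
  finally show "stage x0 a0 s0 \<gamma> (mult_head lam s0) + \<beta> * (\<Sum>s1\<in>UNIV. Q s0 s1 *
      Lag_sup (mult_shift lam s0 a0) (\<gamma> + mult_head lam s0) (zeta M x0 a0 s0) s1) \<le> Lag_sup lam \<gamma> x0 s0 + e"
    unfolding l_def l'_def x1_def .
qed

section \<open>The Bellman equation\<close>

definition bellman_obj :: "(real^'i \<Rightarrow> 'x \<Rightarrow> 's \<Rightarrow> real) \<Rightarrow> real^'i \<Rightarrow> 'x \<Rightarrow> 's \<Rightarrow> real^'i \<Rightarrow> real" where
  "bellman_obj F \<gamma> x s l =
    (SUP a\<in>adm_acts x s. stage x a s \<gamma> l + \<beta> * (\<Sum>s'\<in>UNIV. Q s s' * F (\<gamma> + l) (zeta M x a s) s'))"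

lemma Bell_eq_INF: "Bell M F \<gamma> x s = (INF l\<in>Pos. bellman_obj F \<gamma> x s l)"
  unfolding Bell_def bellman_obj_def stage_def adm_acts_def by simp

lemma le_bellman_obj:
  "a \<in> adm_acts x s \<Longrightarrow>
    stage x a s \<gamma> l + \<beta> * (\<Sum>s'\<in>UNIV. Q s s' * F (\<gamma> + l) (zeta M x a s) s') \<le> bellman_obj F \<gamma> x s l"
  unfolding bellman_obj_def by (rule cSUP_upper) (auto intro!: bdd_above_finite finite_adm_acts)

lemma bellman_obj_le:
  "x \<in> Xs M \<Longrightarrow> (\<And>a. a \<in> adm_acts x s \<Longrightarrow>
    stage x a s \<gamma> l + \<beta> * (\<Sum>s'\<in>UNIV. Q s s' * F (\<gamma> + l) (zeta M x a s) s') \<le> c) \<Longrightarrow>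
    bellman_obj F \<gamma> x s l \<le> c"
  unfolding bellman_obj_def by (rule cSUP_least[OF adm_acts_nonempty])

lemma le_Bell: "(\<And>l. l \<in> Pos \<Longrightarrow> c \<le> bellman_obj F \<gamma> x s l) \<Longrightarrow> c \<le> Bell M F \<gamma> x s"
  unfolding Bell_eq_INF using zero_in_Pos by (intro cINF_greatest) auto

text \<open>Property (iii) of \<open>\<N>\<close>; it keeps the infimum in the Bellman operator finite.\<close>
definition majorizes_feasible :: "(real^'i \<Rightarrow> 'x \<Rightarrow> 's \<Rightarrow> real) \<Rightarrow> bool" where
  "majorizes_feasible F \<longleftrightarrow>
    (\<forall>x\<in>Xs M. \<forall>s a. feasible M x s a \<longrightarrow> (\<forall>\<gamma>\<in>Pos. weighted_value \<gamma> a x s \<le> F \<gamma> x s))"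

lemma majorizes_feasible_Dval: "majorizes_feasible (Dval M)"
  unfolding majorizes_feasible_def using weighted_value_le_Dval by blast

lemma bdd_below_bellman_obj:
  assumes F: "majorizes_feasible F" and x0: "x0 \<in> Xs M" and \<gamma>: "\<gamma> \<in> Pos"
  shows "bdd_below (bellman_obj F \<gamma> x0 s0 ` Pos)"
proof (rule bdd_belowI2[where m="- value_bound \<gamma>"])
  fix l :: "real^'i" assume l: "l \<in> Pos"
  obtain a where a: "feasible M x0 s0 a" using feasible_exists[OF x0] by blast
  have adm: "adm M x0 a" using a unfolding feasible_def by simp
  let ?x1 = "zeta M x0 (a [s0]) s0" and ?a' = "plan_shift a s0"
  have x1: "?x1 \<in> Xs M" using zeta_Xs[OF x0 adm_in_Act[OF adm]] by simp
  have "weighted_value (\<gamma> + l) ?a' ?x1 s1 \<le> F (\<gamma> + l) ?x1 s1" for s1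
    using F x1 feasible_plan_shift[OF a] Pos_add[OF \<gamma> l] unfolding majorizes_feasible_def by blast
  then have "stage x0 (a [s0]) s0 \<gamma> l + \<beta> * (\<Sum>s1\<in>UNIV. Q s0 s1 * weighted_value (\<gamma> + l) ?a' ?x1 s1)
      \<le> stage x0 (a [s0]) s0 \<gamma> l + \<beta> * (\<Sum>s1\<in>UNIV. Q s0 s1 * F (\<gamma> + l) ?x1 s1)"
    by (rule add_left_mono[OF disc_step_mono])
  also have "\<dots> \<le> bellman_obj F \<gamma> x0 s0 l" by (rule le_bellman_obj[OF adm_first_act[OF adm]])
  finally have "weighted_value \<gamma> a x0 s0 + (\<Sum>i\<in>UNIV. l $ i * (plan_value (gcon M i) a x0 s0 - gbar M i))
      \<le> bellman_obj F \<gamma> x0 s0 l"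
    unfolding weighted_value_rec[OF adm x0] .
  moreover have "0 \<le> (\<Sum>i\<in>UNIV. l $ i * (plan_value (gcon M i) a x0 s0 - gbar M i))"
    using l feasible_constraint[OF a] by (intro sum_nonneg mult_nonneg_nonneg Pos_nonneg) auto
  moreover have "- value_bound \<gamma> \<le> weighted_value \<gamma> a x0 s0"
    using weighted_value_abs_le[OF adm x0 \<gamma>, of s0] by (simp add: abs_le_iff)
  ultimately show "- value_bound \<gamma> \<le> bellman_obj F \<gamma> x0 s0 l" by linarith
qed

lemma Bell_le_bellman_obj:
  "majorizes_feasible F \<Longrightarrow> x0 \<in> Xs M \<Longrightarrow> \<gamma> \<in> Pos \<Longrightarrow> l \<in> Pos \<Longrightarrow> Bell M F \<gamma> x0 s0 \<le> bellman_obj F \<gamma> x0 s0 l"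
  unfolding Bell_eq_INF by (rule cINF_lower[OF bdd_below_bellman_obj])

lemma Bell_Dval_le:
  assumes x0: "x0 \<in> Xs M" and \<gamma>: "\<gamma> \<in> Pos"
  shows "Bell M (Dval M) \<gamma> x0 s0 \<le> Dval M \<gamma> x0 s0"
proof (rule le_Dval)
  fix lam assume lam: "lam \<in> Lambda M s0"
  let ?l = "mult_head lam s0"
  have l: "?l \<in> Pos" by (rule mult_head_in_Pos[OF Lambda_nonneg[OF lam]])
  have "Bell M (Dval M) \<gamma> x0 s0 \<le> bellman_obj (Dval M) \<gamma> x0 s0 ?l"
    by (rule Bell_le_bellman_obj[OF majorizes_feasible_Dval x0 \<gamma> l])
  also have "\<dots> \<le> Lag_sup lam \<gamma> x0 s0"
  proof (rule bellman_obj_le[OF x0])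
    fix a0 assume a0: "a0 \<in> adm_acts x0 s0"
    then have a0_Act: "a0 \<in> Act M" unfolding adm_acts_def by simp
    have "Dval M (\<gamma> + ?l) (zeta M x0 a0 s0) s1 \<le> Lag_sup (mult_shift lam s0 a0) (\<gamma> + ?l) (zeta M x0 a0 s0) s1"
      for s1 using Dval_le_Lag_sup[OF zeta_Xs[OF x0 a0_Act] Pos_add[OF \<gamma> l] Lambda_mult_shift[OF lam a0_Act]] .
    then have "stage x0 a0 s0 \<gamma> ?l + \<beta> * (\<Sum>s'\<in>UNIV. Q s0 s' * Dval M (\<gamma> + ?l) (zeta M x0 a0 s0) s')
      \<le> stage x0 a0 s0 \<gamma> ?l + \<beta> * (\<Sum>s'\<in>UNIV. Q s0 s' *
          Lag_sup (mult_shift lam s0 a0) (\<gamma> + ?l) (zeta M x0 a0 s0) s')"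
      by (rule add_left_mono[OF disc_step_mono])
    also have "\<dots> \<le> Lag_sup lam \<gamma> x0 s0" by (rule stage_plus_Lag_sup_le[OF lam x0 a0 \<gamma>])
    finally show "stage x0 a0 s0 \<gamma> ?l + \<beta> * (\<Sum>s'\<in>UNIV. Q s0 s' * Dval M (\<gamma> + ?l) (zeta M x0 a0 s0) s')
      \<le> Lag_sup lam \<gamma> x0 s0" .
  qed
  finally show "Bell M (Dval M) \<gamma> x0 s0 \<le> Lag_sup lam \<gamma> x0 s0" .
qed

lemma Lag_mult_glue_le:
  assumes adm: "adm M x0 a" and x0: "x0 \<in> Xs M" and \<gamma>: "\<gamma> \<in> Pos" and l: "l \<in> Pos"
    and \<mu>: "\<And>a s1. \<mu> a s1 \<in> Lambda M s1"
  shows "Lag M a (mult_glue l \<mu>) \<gamma> x0 s0 \<le> stage x0 (a [s0]) s0 \<gamma> l +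
    \<beta> * (\<Sum>s1\<in>UNIV. Q s0 s1 * Lag_sup (\<mu> (a [s0]) s1) (\<gamma> + l) (zeta M x0 (a [s0]) s0) s1)"
proof -
  let ?x1 = "zeta M x0 (a [s0]) s0"
  have x1: "?x1 \<in> Xs M" using zeta_Xs[OF x0 adm_in_Act[OF adm]] by simp
  have "Lag M (plan_shift a s0) (mult_shift (mult_glue l \<mu>) s0 (a [s0])) (\<gamma> + l) ?x1 s1
      = Lag M (plan_shift a s0) (\<mu> (a [s0]) s1) (\<gamma> + l) ?x1 s1" for s1
    by (rule Lag_cong_mult) (auto simp: neq_Nil_conv mult_shift_glue)
  moreover have "Lag M (plan_shift a s0) (\<mu> (a [s0]) s1) (\<gamma> + l) ?x1 s1
      \<le> Lag_sup (\<mu> (a [s0]) s1) (\<gamma> + l) ?x1 s1" for s1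
    by (rule Lag_le_Lag_sup[OF adm_plan_shift[OF adm] x1 \<mu> Pos_add[OF \<gamma> l]])
  ultimately show ?thesis
    unfolding Lag_rec[OF adm x0 Lambda_mult_glue[OF l \<mu>]] mult_head_glue
    by (intro add_left_mono disc_step_mono) simp
qed

lemma Dval_approx_family:
  assumes x0: "x0 \<in> Xs M" and \<gamma>: "\<gamma> \<in> Pos" and e: "0 < e"
  obtains \<mu> where "\<And>a s1. \<mu> a s1 \<in> Lambda M s1"
    "\<And>a s1. a \<in> Act M \<Longrightarrow> Lag_sup (\<mu> a s1) \<gamma> (zeta M x0 a s0) s1 < Dval M \<gamma> (zeta M x0 a s0) s1 + e"
proof -
  define good where "good a s1 m \<longleftrightarrow> m \<in> Lambda M s1 \<and>
      (a \<in> Act M \<longrightarrow> Lag_sup m \<gamma> (zeta M x0 a s0) s1 < Dval M \<gamma> (zeta M x0 a s0) s1 + e)" for a s1 m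
  have exists_good: "\<exists>m. good a s1 m" for a s1
  proof (cases "a \<in> Act M")
    case True
    then show ?thesis using Dval_approx[OF zeta_Xs[OF x0 True] \<gamma> e] unfolding good_def by metis
  qed (use Lambda_zero in \<open>auto simp: good_def\<close>)
  have "good a s1 (SOME m. good a s1 m)" for a s1 by (rule someI_ex[OF exists_good])
  then show ?thesis using that[of "\<lambda>a s1. SOME m. good a s1 m"] unfolding good_def by blast
qed

text \<open>Glue \<open>\<epsilon>\<close>-optimal continuation multipliers behind an arbitrary head \<open>l\<close>.\<close>
lemma Dval_le_Bell:
  assumes x0: "x0 \<in> Xs M" and \<gamma>: "\<gamma> \<in> Pos"
  shows "Dval M \<gamma> x0 s0 \<le> Bell M (Dval M) \<gamma> x0 s0"
proof (rule le_Bell)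
  fix l :: "real^'i" assume l: "l \<in> Pos"
  show "Dval M \<gamma> x0 s0 \<le> bellman_obj (Dval M) \<gamma> x0 s0 l"
  proof (rule field_le_epsilon)
    fix e :: real assume e: "0 < e"
    obtain \<mu> where \<mu>: "\<And>a s1. \<mu> a s1 \<in> Lambda M s1"
      "\<And>a s1. a \<in> Act M \<Longrightarrow> Lag_sup (\<mu> a s1) (\<gamma> + l) (zeta M x0 a s0) s1 < Dval M (\<gamma> + l) (zeta M x0 a s0) s1 + e"
      using Dval_approx_family[OF x0 Pos_add[OF \<gamma> l] e] by metis
    have "Dval M \<gamma> x0 s0 \<le> Lag_sup (mult_glue l \<mu>) \<gamma> x0 s0"
      by (rule Dval_le_Lag_sup[OF x0 \<gamma> Lambda_mult_glue[OF l \<mu>(1)]])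
    also have "\<dots> \<le> bellman_obj (Dval M) \<gamma> x0 s0 l + \<beta> * e"
    proof (rule Lag_sup_le[OF x0])
      fix a assume adm: "adm M x0 a"
      let ?a0 = "a [s0]" let ?x1 = "zeta M x0 (a [s0]) s0"
      have "\<beta> * (\<Sum>s1\<in>UNIV. Q s0 s1 * Lag_sup (\<mu> ?a0 s1) (\<gamma> + l) ?x1 s1)
          \<le> \<beta> * (\<Sum>s1\<in>UNIV. Q s0 s1 * Dval M (\<gamma> + l) ?x1 s1) + \<beta> * e"
        using \<mu>(2)[OF adm_in_Act[OF adm, of "[s0]"]] by (intro disc_step_le_add less_imp_le) simp
      then have "Lag M a (mult_glue l \<mu>) \<gamma> x0 s0
          \<le> stage x0 ?a0 s0 \<gamma> l + \<beta> * (\<Sum>s1\<in>UNIV. Q s0 s1 * Dval M (\<gamma> + l) ?x1 s1) + \<beta> * e"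
        using Lag_mult_glue_le[where \<mu>=\<mu>, OF adm x0 \<gamma> l \<mu>(1), of s0] by simp
      also have "\<dots> \<le> bellman_obj (Dval M) \<gamma> x0 s0 l + \<beta> * e"
        using le_bellman_obj[OF adm_first_act[OF adm]] by simp
      finally show "Lag M a (mult_glue l \<mu>) \<gamma> x0 s0 \<le> bellman_obj (Dval M) \<gamma> x0 s0 l + \<beta> * e" .
    qed
    also have "\<dots> \<le> bellman_obj (Dval M) \<gamma> x0 s0 l + e"
      using disc_less_1 e by (simp add: mult_less_cancel_right2 less_imp_le)
    finally show "Dval M \<gamma> x0 s0 \<le> bellman_obj (Dval M) \<gamma> x0 s0 l + e" .
  qed
qed

section \<open>Maximality among fixed points\<close>

lemma Lconst_eq: "Lconst M = (supnorm M (rew M) + (\<Sum>i\<in>UNIV. supnorm M (gcon M i))) / (1 - \<beta>)"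
  unfolding Lconst_def ..

lemma Lconst_nonneg: "x \<in> Xs M \<Longrightarrow> 0 \<le> Lconst M"
  unfolding Lconst_eq using supnorm_nonneg[OF bounded_rew] supnorm_nonneg[OF bounded_gcon] disc_less_1
  by (intro divide_nonneg_pos add_nonneg_nonneg sum_nonneg) auto

lemma supnorm_gcon_le_Lconst: "x \<in> Xs M \<Longrightarrow> supnorm M (gcon M i) / (1 - \<beta>) \<le> Lconst M"
proof -
  assume x: "x \<in> Xs M"
  have "supnorm M (gcon M i) \<le> (\<Sum>i\<in>UNIV. supnorm M (gcon M i))"
    by (rule member_le_sum) (use supnorm_nonneg[OF bounded_gcon x] in auto)
  then show ?thesis
    unfolding Lconst_eq using supnorm_nonneg[OF bounded_rew x] disc_less_1 by (simp add: divide_right_mono)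
qed

lemma value_bound_le:
  assumes x: "x \<in> Xs M" and \<gamma>: "\<gamma> \<in> Pos" and le_c: "\<And>i. \<gamma> $ i \<le> c"
  shows "value_bound \<gamma> \<le> (1 + c) * Lconst M"
proof -
  let ?R = "supnorm M (rew M)" and ?G = "\<Sum>i\<in>UNIV. supnorm M (gcon M i)"
  have c: "0 \<le> c" using Pos_nonneg[OF \<gamma>] le_c order_trans by blast
  have "(\<Sum>i\<in>UNIV. \<gamma> $ i * supnorm M (gcon M i)) \<le> c * ?G"
    unfolding sum_distrib_left using le_c supnorm_nonneg[OF bounded_gcon x]
    by (intro sum_mono mult_right_mono) auto
  moreover have "0 \<le> c * ?R" "0 \<le> ?G"
    using c supnorm_nonneg[OF bounded_rew x] supnorm_nonneg[OF bounded_gcon x] by (auto intro: sum_nonneg)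
  ultimately have "?R + (\<Sum>i\<in>UNIV. \<gamma> $ i * supnorm M (gcon M i)) \<le> (1 + c) * (?R + ?G)"
    by (simp add: algebra_simps)
  then show ?thesis unfolding value_bound_def Lconst_eq using disc_less_1 by (simp add: divide_right_mono)
qed

lemma value_bound_le_sum:
  assumes "x \<in> Xs M" "\<gamma> \<in> Pos"
  shows "value_bound \<gamma> \<le> (1 + (\<Sum>i\<in>UNIV. \<gamma> $ i)) * Lconst M"
  using Pos_nonneg[OF assms(2)] by (intro value_bound_le[OF assms] member_le_sum) auto

text \<open>A bound on the gap \<open>F - Lag_sup lam\<close> after unrolling the Bellman equation \<open>n\<close> times;
  it tends to \<open>0\<close> because the masses of \<open>lam\<close> are summable.\<close>
definition gap_bound :: "nat \<Rightarrow> ('s, 'a, 'i) mult \<Rightarrow> real^'i \<Rightarrow> 's \<Rightarrow> real" where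
  "gap_bound n lam \<gamma> s =
    2 * Lconst M * (\<beta> ^ n * (1 + (\<Sum>i\<in>UNIV. \<gamma> $ i)) + (\<Sum>k<n. \<beta> ^ (n - k) * mult_mass k lam s))"

lemma gap_bound_tendsto_zero:
  assumes "lam \<in> Lambda M s"
  shows "(\<lambda>n. gap_bound n lam \<gamma> s) \<longlonglongrightarrow> 0"
proof -
  have "(\<lambda>n. gap_bound n lam \<gamma> s) \<longlonglongrightarrow> 2 * Lconst M * (0 * (1 + (\<Sum>i\<in>UNIV. \<gamma> $ i)) + 0)"
    unfolding gap_bound_def using disc_pos disc_less_1
    by (intro tendsto_intros LIMSEQ_power_zero discounted_convolution_tendsto_zero
        summable_mult_mass[OF assms] mult_mass_nonneg[OF Lambda_nonneg[OF assms]]) auto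
  then show ?thesis by simp
qed

lemma gap_bound_step:
  assumes nonneg: "nonneg_mult lam" and a0: "a0 \<in> Act M" and L: "0 \<le> Lconst M"
  shows "\<beta> * (\<Sum>s1\<in>UNIV. Q s0 s1 * gap_bound n (mult_shift lam s0 a0) (\<gamma> + mult_head lam s0) s1)
    \<le> gap_bound (Suc n) lam \<gamma> s0"
proof -
  let ?l' = "mult_shift lam s0 a0" and ?A = "1 + (\<Sum>i\<in>UNIV. \<gamma> $ i)"
    and ?S = "\<Sum>i\<in>UNIV. lam ([s0], []) i"
  let ?E = "\<lambda>k. \<Sum>s1\<in>UNIV. Q s0 s1 * mult_mass k ?l' s1"
  have head: "(\<Sum>i\<in>UNIV. (\<gamma> + mult_head lam s0) $ i) = (\<Sum>i\<in>UNIV. \<gamma> $ i) + ?S"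
    by (simp add: sum.distrib)
  have "(\<Sum>s1\<in>UNIV. Q s0 s1 * gap_bound n ?l' (\<gamma> + mult_head lam s0) s1) =
      (\<Sum>s1\<in>UNIV. Q s0 s1 * (2 * Lconst M * (\<beta> ^ n * (?A + ?S)))) +
      (\<Sum>s1\<in>UNIV. \<Sum>k<n. 2 * Lconst M * (\<beta> ^ (n - k) * (Q s0 s1 * mult_mass k ?l' s1)))"
    unfolding gap_bound_def head by (simp add: distrib_left sum.distrib sum_distrib_left mult_ac)
  also have "(\<Sum>s1\<in>UNIV. Q s0 s1 * (2 * Lconst M * (\<beta> ^ n * (?A + ?S)))) = 2 * Lconst M * (\<beta> ^ n * (?A + ?S))"
    by (simp add: sum_distrib_right[symmetric] Q_sum)
  also have "(\<Sum>s1\<in>UNIV. \<Sum>k<n. 2 * Lconst M * (\<beta> ^ (n - k) * (Q s0 s1 * mult_mass k ?l' s1))) =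
      (\<Sum>k<n. 2 * Lconst M * (\<beta> ^ (n - k) * ?E k))"
    by (subst sum.swap) (simp add: sum_distrib_left)
  finally have "\<beta> * (\<Sum>s1\<in>UNIV. Q s0 s1 * gap_bound n ?l' (\<gamma> + mult_head lam s0) s1)
      = 2 * Lconst M * (\<beta> ^ Suc n * ?A + (\<beta> ^ Suc n * ?S + (\<Sum>k<n. \<beta> ^ (n - k) * (\<beta> * ?E k))))"
    by (simp add: distrib_left sum_distrib_left mult_ac)
  also have "\<dots> \<le> 2 * Lconst M * (\<beta> ^ Suc n * ?A +
      (\<beta> ^ Suc n * mult_mass 0 lam s0 + (\<Sum>k<n. \<beta> ^ (n - k) * mult_mass (Suc k) lam s0)))"
    using mult_head_sum_le_mass[OF nonneg, of s0] mult_mass_shift_le[OF nonneg a0] disc_pos L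
    by (intro mult_left_mono add_left_mono add_mono sum_mono) auto
  also have "\<beta> ^ Suc n * mult_mass 0 lam s0 + (\<Sum>k<n. \<beta> ^ (n - k) * mult_mass (Suc k) lam s0)
      = (\<Sum>k<Suc n. \<beta> ^ (Suc n - k) * mult_mass k lam s0)"
    by (subst sum.lessThan_Suc_shift) simp
  finally show ?thesis unfolding gap_bound_def by (simp add: add.assoc)
qed

lemma fixed_point_gap:
  assumes F: "majorizes_feasible F"
    and F_le: "\<And>\<gamma> x s. \<gamma> \<in> Pos \<Longrightarrow> x \<in> Xs M \<Longrightarrow> F \<gamma> x s \<le> (1 + (\<Sum>i\<in>UNIV. \<gamma> $ i)) * Lconst M"
    and fixed: "\<And>\<gamma> x s. \<gamma> \<in> Pos \<Longrightarrow> x \<in> Xs M \<Longrightarrow> Bell M F \<gamma> x s = F \<gamma> x s"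
  shows "lam \<in> Lambda M s \<Longrightarrow> \<gamma> \<in> Pos \<Longrightarrow> x \<in> Xs M \<Longrightarrow> F \<gamma> x s - Lag_sup lam \<gamma> x s \<le> gap_bound n lam \<gamma> s"
proof (induction n arbitrary: lam \<gamma> x s)
  case 0
  then show ?case
    using F_le[of \<gamma> x s] neg_value_bound_le_Lag_sup[of x \<gamma> lam s] value_bound_le_sum[of x \<gamma>]
    by (simp add: gap_bound_def algebra_simps)
next
  case (Suc n lam \<gamma> x0 s0)
  note lam = Suc.prems(1) and \<gamma> = Suc.prems(2) and x0 = Suc.prems(3)
  let ?l = "mult_head lam s0"
  have l: "?l \<in> Pos" by (rule mult_head_in_Pos[OF Lambda_nonneg[OF lam]])
  have "F \<gamma> x0 s0 \<le> bellman_obj F \<gamma> x0 s0 ?l"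
    using Bell_le_bellman_obj[OF F x0 \<gamma> l] fixed[OF \<gamma> x0] by simp
  also have "\<dots> \<le> Lag_sup lam \<gamma> x0 s0 + gap_bound (Suc n) lam \<gamma> s0"
  proof (rule bellman_obj_le[OF x0])
    fix a0 assume a0: "a0 \<in> adm_acts x0 s0"
    then have a0_Act: "a0 \<in> Act M" unfolding adm_acts_def by simp
    let ?x1 = "zeta M x0 a0 s0" and ?l' = "mult_shift lam s0 a0"
    have "F (\<gamma> + ?l) ?x1 s1 \<le> Lag_sup ?l' (\<gamma> + ?l) ?x1 s1 + gap_bound n ?l' (\<gamma> + ?l) s1" for s1
      using Suc.IH[OF Lambda_mult_shift[OF lam a0_Act] Pos_add[OF \<gamma> l] zeta_Xs[OF x0 a0_Act, of s0], where s=s1]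
      by linarith
    then have "stage x0 a0 s0 \<gamma> ?l + \<beta> * (\<Sum>s'\<in>UNIV. Q s0 s' * F (\<gamma> + ?l) ?x1 s')
        \<le> stage x0 a0 s0 \<gamma> ?l + \<beta> * (\<Sum>s'\<in>UNIV. Q s0 s' *
          (Lag_sup ?l' (\<gamma> + ?l) ?x1 s' + gap_bound n ?l' (\<gamma> + ?l) s'))"
      by (rule add_left_mono[OF disc_step_mono])
    also have "\<dots> = (stage x0 a0 s0 \<gamma> ?l + \<beta> * (\<Sum>s'\<in>UNIV. Q s0 s' * Lag_sup ?l' (\<gamma> + ?l) ?x1 s'))
          + \<beta> * (\<Sum>s'\<in>UNIV. Q s0 s' * gap_bound n ?l' (\<gamma> + ?l) s')"
      by (simp add: distrib_left sum.distrib)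
    also have "\<dots> \<le> Lag_sup lam \<gamma> x0 s0 + gap_bound (Suc n) lam \<gamma> s0"
      by (rule add_mono[OF stage_plus_Lag_sup_le[OF lam x0 a0 \<gamma>]
            gap_bound_step[OF Lambda_nonneg[OF lam] a0_Act Lconst_nonneg[OF x0]]])
    finally show "stage x0 a0 s0 \<gamma> ?l + \<beta> * (\<Sum>s'\<in>UNIV. Q s0 s' * F (\<gamma> + ?l) ?x1 s')
        \<le> Lag_sup lam \<gamma> x0 s0 + gap_bound (Suc n) lam \<gamma> s0" .
  qed
  finally show ?case by simp
qed

lemma fixed_point_le_Dval:
  assumes F: "majorizes_feasible F"
    and F_le: "\<And>\<gamma> x s. \<gamma> \<in> Pos \<Longrightarrow> x \<in> Xs M \<Longrightarrow> F \<gamma> x s \<le> (1 + (\<Sum>i\<in>UNIV. \<gamma> $ i)) * Lconst M"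
    and fixed: "\<And>\<gamma> x s. \<gamma> \<in> Pos \<Longrightarrow> x \<in> Xs M \<Longrightarrow> Bell M F \<gamma> x s = F \<gamma> x s"
    and x: "x \<in> Xs M" and \<gamma>: "\<gamma> \<in> Pos"
  shows "F \<gamma> x s \<le> Dval M \<gamma> x s"
proof (rule le_Dval)
  fix lam assume lam: "lam \<in> Lambda M s"
  have "F \<gamma> x s - Lag_sup lam \<gamma> x s \<le> 0"
    using fixed_point_gap[OF F F_le fixed lam \<gamma> x]
    by (intro LIMSEQ_le_const[OF gap_bound_tendsto_zero[OF lam]]) auto
  then show "F \<gamma> x s \<le> Lag_sup lam \<gamma> x s" by simp
qed

section \<open>Membership of the dual value in \<open>\<N>\<close>\<close>

lemma Dval_abs_le_Bk:
  assumes x: "x \<in> Xs M" and \<gamma>: "\<gamma> \<in> Bk k"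
  shows "\<bar>Dval M \<gamma> x s\<bar> \<le> (1 + real k) * Lconst M"
proof -
  have \<gamma>_Pos: "\<gamma> \<in> Pos" and "\<And>i. \<gamma> $ i \<le> real k" using \<gamma> unfolding Bk_def by auto
  then have "value_bound \<gamma> \<le> (1 + real k) * Lconst M" by (rule value_bound_le[OF x])
  then show ?thesis
    using Dval_le_value_bound[OF x \<gamma>_Pos, of s] neg_value_bound_le_Dval[OF x \<gamma>_Pos, of s]
    unfolding abs_le_iff by linarith
qed

lemma normk_Dval_bounds:
  assumes x: "x \<in> Xs M"
  shows "0 \<le> normk (Dval M) x s k" "normk (Dval M) x s k \<le> (1 + real k) * Lconst M"
proof -
  have bdd: "bdd_above ((\<lambda>\<gamma>. \<bar>Dval M \<gamma> x s\<bar>) ` Bk k)"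
    by (rule bdd_aboveI2[where M="(1 + real k) * Lconst M"]) (rule Dval_abs_le_Bk[OF x])
  have "\<bar>Dval M 0 x s\<bar> \<le> normk (Dval M) x s k"
    unfolding normk_def by (rule cSUP_upper[OF zero_in_Bk bdd])
  then show "0 \<le> normk (Dval M) x s k" by linarith
  show "normk (Dval M) x s k \<le> (1 + real k) * Lconst M"
    unfolding normk_def by (rule cSUP_least) (use zero_in_Bk Dval_abs_le_Bk[OF x] in blast)+
qed

lemma normk_Dval_weighted_le:
  assumes x: "x \<in> Xs M"
  shows "(1/2) ^ Suc k * normk (Dval M) x s (Suc k) \<le> Lconst M * (real (Suc k) * (1/2) ^ k)"
proof -
  have "(1/2::real) ^ Suc k * normk (Dval M) x s (Suc k) \<le> (1/2) ^ Suc k * ((1 + real (Suc k)) * Lconst M)"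
    by (rule mult_left_mono[OF normk_Dval_bounds(2)[OF x]]) simp
  also have "\<dots> = Lconst M * ((1 + real (Suc k)) / 2 * (1/2) ^ k)" by (simp add: field_simps)
  also have "\<dots> \<le> Lconst M * (real (Suc k) * (1/2) ^ k)"
    by (rule mult_left_mono[OF _ Lconst_nonneg[OF x]]) (simp add: field_simps)
  finally show ?thesis .
qed

lemma summable_normk_Dval:
  "x \<in> Xs M \<Longrightarrow> summable (\<lambda>k. (1/2) ^ Suc k * normk (Dval M) x s (Suc k))"
  by (rule summable_comparison_test'[where N=0, OF summable_mult[OF summable_Suc_times_half_power]])
     (use normk_Dval_bounds(1) normk_Dval_weighted_le in auto)

text \<open>The inner series is bounded uniformly in \<open>x\<close>, so the outer one is dominated by the
  geometric weights \<open>(1/2)\<^sup>j\<close> along the injective enumeration.\<close>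
lemma inM_Dval:
  assumes inj: "inj_on xidx (Xs M)"
  shows "inM M xidx (Dval M)"
  unfolding inM_def
proof (intro conjI ballI allI impI summable_normk_Dval)
  fix x s k assume x: "x \<in> Xs M"
  show "bounded ((\<lambda>\<gamma>. Dval M \<gamma> x s) ` Bk k)"
    unfolding bounded_iff using Dval_abs_le_Bk[OF x] by auto
next
  fix s
  let ?S = "\<lambda>x. \<Sum>k. (1/2) ^ Suc k * normk (Dval M) x s (Suc k)"
  let ?B = "\<Sum>k. Lconst M * (real (Suc k) * (1/2::real) ^ k)"
  have S: "0 \<le> ?S x \<and> ?S x \<le> ?B" if x: "x \<in> Xs M" for x
    using normk_Dval_bounds(1)[OF x] normk_Dval_weighted_le[OF x]
    by (intro conjI suminf_nonneg suminf_le summable_normk_Dval[OF x]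
        summable_mult[OF summable_Suc_times_half_power]) auto
  have "(\<lambda>n::nat. (1/2::real) ^ n) summable_on UNIV"
    by (rule norm_summable_imp_summable_on) (simp add: summable_geometric)
  then have "(\<lambda>n::nat. (1/2::real) ^ n) summable_on xidx ` Xs M"
    by (rule summable_on_subset_banach) simp
  then have "(\<lambda>x. (1/2::real) ^ xidx x) summable_on Xs M"
    using summable_on_reindex[OF inj, of "\<lambda>n. (1/2::real) ^ n"] by (simp add: comp_def)
  then have "(\<lambda>x. ?B * (1/2::real) ^ xidx x) summable_on Xs M"
    by (rule summable_on_cmult_right)
  then show "(\<lambda>x. (1/2) ^ xidx x * ?S x) summable_on Xs M"
    by (rule summable_on_comparison_test) (use S in \<open>auto simp: mult.commute mult_left_mono\<close>)
qed

text \<open>The Lagrangian is affine in the pair \<open>(\<gamma>, lam)\<close>, so \<open>\<epsilon>\<close>-optimal multipliers for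
  \<open>\<gamma>1\<close> and \<open>\<gamma>2\<close> combine to a multiplier for the convex combination.\<close>
lemma convex_on_Dval:
  assumes x: "x \<in> Xs M"
  shows "convex_on Pos (\<lambda>\<gamma>. Dval M \<gamma> x s)"
  unfolding convex_on_def
proof (intro conjI convex_Pos ballI allI impI)
  fix \<gamma>1 \<gamma>2 :: "real^'i" and u v :: real
  assume \<gamma>1: "\<gamma>1 \<in> Pos" and \<gamma>2: "\<gamma>2 \<in> Pos" and u: "0 \<le> u" and v: "0 \<le> v" and uv: "u + v = 1"
  let ?\<gamma> = "u *\<^sub>R \<gamma>1 + v *\<^sub>R \<gamma>2"
  have \<gamma>: "?\<gamma> \<in> Pos" using \<gamma>1 \<gamma>2 u v unfolding Pos_def by auto
  show "Dval M ?\<gamma> x s \<le> u * Dval M \<gamma>1 x s + v * Dval M \<gamma>2 x s"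
  proof (rule field_le_epsilon)
    fix e :: real assume e: "0 < e"
    obtain l1 where l1: "l1 \<in> Lambda M s" "Lag_sup l1 \<gamma>1 x s < Dval M \<gamma>1 x s + e"
      using Dval_approx[OF x \<gamma>1 e] .
    obtain l2 where l2: "l2 \<in> Lambda M s" "Lag_sup l2 \<gamma>2 x s < Dval M \<gamma>2 x s + e"
      using Dval_approx[OF x \<gamma>2 e] .
    let ?l = "\<lambda>h i. u * l1 h i + v * l2 h i"
    have l: "?l \<in> Lambda M s" by (rule Lambda_convex_comb[OF l1(1) l2(1) u v])
    have "Dval M ?\<gamma> x s \<le> Lag_sup ?l ?\<gamma> x s" by (rule Dval_le_Lag_sup[OF x \<gamma> l])
    also have "\<dots> \<le> u * Lag_sup l1 \<gamma>1 x s + v * Lag_sup l2 \<gamma>2 x s"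
    proof (rule Lag_sup_le[OF x])
      fix a assume adm: "adm M x a"
      have "weighted_value ?\<gamma> a x s = u * weighted_value \<gamma>1 a x s + v * weighted_value \<gamma>2 a x s"
        unfolding weighted_value_def using uv
        by (simp add: sum_distrib_left sum.distrib algebra_simps flip: distrib_right)
      then have "Lag M a ?l ?\<gamma> x s = u * Lag M a l1 \<gamma>1 x s + v * Lag M a l2 \<gamma>2 x s"
        unfolding Lag_eq[OF adm x l] Lag_eq[OF adm x l1(1)] Lag_eq[OF adm x l2(1)]
          mult_value_convex_comb[OF adm x l1(1) l2(1)]
        by (simp add: algebra_simps)
      also have "\<dots> \<le> u * Lag_sup l1 \<gamma>1 x s + v * Lag_sup l2 \<gamma>2 x s"
        by (intro add_mono mult_left_mono Lag_le_Lag_sup[OF adm x] l1(1) l2(1) \<gamma>1 \<gamma>2 u v)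
      finally show "Lag M a ?l ?\<gamma> x s \<le> u * Lag_sup l1 \<gamma>1 x s + v * Lag_sup l2 \<gamma>2 x s" .
    qed
    also have "\<dots> \<le> u * (Dval M \<gamma>1 x s + e) + v * (Dval M \<gamma>2 x s + e)"
      using l1(2) l2(2) u v by (intro add_mono mult_left_mono) auto
    also have "\<dots> = u * Dval M \<gamma>1 x s + v * Dval M \<gamma>2 x s + e"
      using uv by (simp add: algebra_simps flip: distrib_left)
    finally show "Dval M ?\<gamma> x s \<le> u * Dval M \<gamma>1 x s + v * Dval M \<gamma>2 x s + e" .
  qed
qed

lemma weighted_value_diff_le:
  assumes "adm M x a" "x \<in> Xs M"
  shows "weighted_value \<gamma>1 a x s \<le> weighted_value \<gamma>2 a x s + Lconst M * (\<Sum>i\<in>UNIV. \<bar>\<gamma>1 $ i - \<gamma>2 $ i\<bar>)"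
proof -
  have "(\<gamma>1 $ i - \<gamma>2 $ i) * plan_value (gcon M i) a x s \<le> \<bar>\<gamma>1 $ i - \<gamma>2 $ i\<bar> * Lconst M" for i
  proof -
    have "(\<gamma>1 $ i - \<gamma>2 $ i) * plan_value (gcon M i) a x s
        \<le> \<bar>\<gamma>1 $ i - \<gamma>2 $ i\<bar> * \<bar>plan_value (gcon M i) a x s\<bar>"
      by (metis abs_ge_self abs_mult)
    also have "\<dots> \<le> \<bar>\<gamma>1 $ i - \<gamma>2 $ i\<bar> * Lconst M"
      using plan_value_abs_le[OF bounded_gcon assms, where s=s] supnorm_gcon_le_Lconst[OF assms(2), of i]
      by (intro mult_left_mono) (auto intro: order_trans)
    finally show ?thesis .
  qed
  then have "(\<Sum>i\<in>UNIV. (\<gamma>1 $ i - \<gamma>2 $ i) * plan_value (gcon M i) a x s)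
      \<le> Lconst M * (\<Sum>i\<in>UNIV. \<bar>\<gamma>1 $ i - \<gamma>2 $ i\<bar>)"
    unfolding sum_distrib_left by (intro sum_mono) (simp add: mult.commute)
  then show ?thesis
    unfolding weighted_value_def by (simp add: left_diff_distrib sum_subtractf)
qed

lemma Dval_le_Lipschitz:
  assumes x: "x \<in> Xs M" and \<gamma>1: "\<gamma>1 \<in> Pos" and \<gamma>2: "\<gamma>2 \<in> Pos"
  shows "Dval M \<gamma>1 x s \<le> Dval M \<gamma>2 x s + Lconst M * (\<Sum>i\<in>UNIV. \<bar>\<gamma>1 $ i - \<gamma>2 $ i\<bar>)"
proof -
  let ?c = "Lconst M * (\<Sum>i\<in>UNIV. \<bar>\<gamma>1 $ i - \<gamma>2 $ i\<bar>)"
  have "Dval M \<gamma>1 x s - ?c \<le> Dval M \<gamma>2 x s"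
  proof (rule le_Dval)
    fix lam assume lam: "lam \<in> Lambda M s"
    have "Lag_sup lam \<gamma>1 x s \<le> Lag_sup lam \<gamma>2 x s + ?c"
    proof (rule Lag_sup_le[OF x])
      fix a assume adm: "adm M x a"
      have "Lag M a lam \<gamma>1 x s \<le> Lag M a lam \<gamma>2 x s + ?c"
        unfolding Lag_eq[OF adm x lam] using weighted_value_diff_le[OF adm x] by simp
      also have "\<dots> \<le> Lag_sup lam \<gamma>2 x s + ?c" using Lag_le_Lag_sup[OF adm x lam \<gamma>2] by simp
      finally show "Lag M a lam \<gamma>1 x s \<le> Lag_sup lam \<gamma>2 x s + ?c" .
    qed
    moreover have "Dval M \<gamma>1 x s \<le> Lag_sup lam \<gamma>1 x s" by (rule Dval_le_Lag_sup[OF x \<gamma>1 lam])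
    ultimately show "Dval M \<gamma>1 x s - ?c \<le> Lag_sup lam \<gamma>2 x s" by linarith
  qed
  then show ?thesis by linarith
qed

lemma inN_Dval:
  assumes "inj_on xidx (Xs M)"
  shows "inN M xidx (Dval M)"
  unfolding inN_def
proof (intro conjI inM_Dval[OF assms] ballI allI impI convex_on_Dval)
  fix x s and \<gamma>1 \<gamma>2 :: "real^'i" assume x: "x \<in> Xs M" and \<gamma>1: "\<gamma>1 \<in> Pos" and \<gamma>2: "\<gamma>2 \<in> Pos"
  have "(\<Sum>i\<in>UNIV. \<bar>\<gamma>2 $ i - \<gamma>1 $ i\<bar>) = (\<Sum>i\<in>UNIV. \<bar>\<gamma>1 $ i - \<gamma>2 $ i\<bar>)"
    by (simp add: abs_minus_commute)
  then show "\<bar>Dval M \<gamma>1 x s - Dval M \<gamma>2 x s\<bar> \<le> Lconst M * (\<Sum>i\<in>UNIV. \<bar>\<gamma>1 $ i - \<gamma>2 $ i\<bar>)"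
    using Dval_le_Lipschitz[OF x \<gamma>1 \<gamma>2, of s] Dval_le_Lipschitz[OF x \<gamma>2 \<gamma>1, of s] by (simp add: abs_le_iff)
next
  fix x s a and \<gamma> :: "real^'i" assume "x \<in> Xs M" "feasible M x s a" "\<gamma> \<in> Pos"
  then show "condsum M [s] (stg M (rew M) a x) + (\<Sum>i\<in>UNIV. \<gamma> $ i * condsum M [s] (stg M (gcon M i) a x))
      \<le> Dval M \<gamma> x s"
    using weighted_value_le_Dval unfolding weighted_value_def plan_value_def by blast
next
  fix x s and \<gamma> :: "real^'i" assume "x \<in> Xs M" "\<gamma> \<in> Pos"
  then show "Dval M \<gamma> x s \<le> (1 + (\<Sum>i\<in>UNIV. \<gamma> $ i)) * Lconst M"
    using Dval_le_value_bound value_bound_le_sum by (meson order_trans)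
qed

lemma inN_majorizes_feasible: "inN M xidx F \<Longrightarrow> majorizes_feasible F"
  unfolding inN_def majorizes_feasible_def weighted_value_def plan_value_def by blast

lemma inN_le: "inN M xidx F \<Longrightarrow> \<gamma> \<in> Pos \<Longrightarrow> x \<in> Xs M \<Longrightarrow> F \<gamma> x s \<le> (1 + (\<Sum>i\<in>UNIV. \<gamma> $ i)) * Lconst M"
  unfolding inN_def by blast

end

theorem corollary4p6:
  fixes M :: "(real^'m, real^'n, 's::finite, 'i::finite) model"
    and xidx :: "real^'m \<Rightarrow> nat"
  assumes trans_pos: "\<forall>s s'. trP M s s' > 0"
    and trans_sum: "\<forall>s. (\<Sum>s'\<in>UNIV. trP M s s') = 1"
    and fin_A: "finite (Act M)"
    and cnt_X: "countable (Xs M)"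
    and enum_X: "inj_on xidx (Xs M)" "\<forall>x\<in>Xs M. xidx x \<ge> 1"
    and zeta_X: "\<forall>x\<in>Xs M. \<forall>a\<in>Act M. \<forall>s. zeta M x a s \<in> Xs M"
    and bnd_r: "\<exists>C. \<forall>x\<in>Xs M. \<forall>a\<in>Act M. \<forall>s. \<bar>rew M x a s\<bar> \<le> C"
    and bnd_g: "\<forall>i. \<exists>C. \<forall>x\<in>Xs M. \<forall>a\<in>Act M. \<forall>s. \<bar>gcon M i x a s\<bar> \<le> C"
    and beta: "0 < disc M" "disc M < 1"
    and feas: "\<forall>x\<in>Xs M. \<forall>s. \<exists>a. feasible M x s a"
  shows "inN M xidx (Dval M)
    \<and> (\<forall>\<gamma>\<in>Pos. \<forall>x\<in>Xs M. \<forall>s. Bell M (Dval M) \<gamma> x s = Dval M \<gamma> x s)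
    \<and> (\<forall>F. inN M xidx F \<and> (\<forall>\<gamma>\<in>Pos. \<forall>x\<in>Xs M. \<forall>s. Bell M F \<gamma> x s = F \<gamma> x s)
           \<longrightarrow> (\<forall>\<gamma>\<in>Pos. \<forall>x\<in>Xs M. \<forall>s. F \<gamma> x s \<le> Dval M \<gamma> x s))"
proof -
  interpret dual_problem M
    using assms by unfold_locales (auto simp: bounded_payoff_def)
  have fixed_point: "Bell M (Dval M) \<gamma> x s = Dval M \<gamma> x s" if "\<gamma> \<in> Pos" "x \<in> Xs M" for \<gamma> x s
    using Bell_Dval_le[OF that(2,1)] Dval_le_Bell[OF that(2,1)] by (rule antisym)
  have greatest: "F \<gamma> x s \<le> Dval M \<gamma> x s"
    if "inN M xidx F" "\<forall>\<gamma>\<in>Pos. \<forall>x\<in>Xs M. \<forall>s. Bell M F \<gamma> x s = F \<gamma> x s" "\<gamma> \<in> Pos" "x \<in> Xs M"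
    for F \<gamma> x s
    using that by (intro fixed_point_le_Dval inN_majorizes_feasible inN_le) auto
  show ?thesis
    using inN_Dval[OF enum_X(1)] fixed_point greatest by blast
qed

end
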